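(* Let $p\in\mathbb{N}^*$ and $\gamma\geq1$. Let $V$ be a subset of a normed vector space and let $f$ be a Banach-space-valued Lip-$\gamma$ map defined on $V$. Assume there exists a homeomorphism $F:\mathbb{R}^p\to V$ which is Lip-$\gamma$. Then $f$ is Lip-$\gamma$ on $V$ in the manifold sense for the $F$-induced Lipschitz structure, i.e. there exists a constant $C$ such that for every $x\in I$ the map $f\circ(\phi_x\circ F^{-1}|_{F(B_p(x,1))})^{-1}:B_p(0,1)\to W$ is Lip-$\gamma$ with norm at most $C$.
   Context: Lip-$\gamma$ (Stein sense): for $m$ the integer with $0<\gamma-m\le1$, a collection $(g^0,\ldots,g^m)$ on a set $U\subseteq E$, $g^k:U\to\mathcal{L}_s(E^{\otimes k},W)$, is Lip-$\gamma$ with norm $\le M$ if $\|g^k(x)(v)\|\le M\|v\|$ and $\|R_k(x,y)(v)\|\le M\|x-y\|^{\gamma-k}\|v\|$ for all $k,x,y,v=v_1\otimes\cdots\otimes v_k$, where $g^k(x)(v)=\sum_{j=k}^m g^j(y)\big(\frac{v\otimes(x-y)^{\otimes(j-k)}}{(j-k)!}\big)+R_k(x,y)(v)$; on open sets the $g^k$ are the derivatives of $g^0$. $W$ denotes the Banach space where $f$ takes values. $F$-induced structure on $V$: let $I=\{\sum_{i=1}^p\frac{k_i}{\sqrt p}e_i:k_i\in\mathbb{Z}\}$ ($e_i$ canonical basis), $\varphi:\mathbb{R}^p\to\mathbb{R}^p$ a Lip-$\gamma$ map equal to the identity on $B_p(0,1)$ and supported in $B_p(0,2)$, $\phi_x(y)=\varphi(y-x)$;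 the atlas on $V$ is $(F(B_p(x,1)),\phi_x\circ F^{-1})_{x\in I}$. *)

theory Defs
  imports "HOL-Analysis.Analysis"
begin

text \<open>A k-linear symmetric map on E (representing an element of L_s(E^{\<otimes>k}, W) via its
  values on elementary tensors v_0 \<otimes> ... \<otimes> v_{k-1}); arguments are given as a
  sequence v :: nat \<Rightarrow> 'e of which only v 0, ..., v (k-1) matter.\<close>
definition multilin_sym :: "nat \<Rightarrow> ((nat \<Rightarrow> 'e::real_vector) \<Rightarrow> 'w::real_vector) \<Rightarrow> bool" where
  "multilin_sym k A \<longleftrightarrow>
     (\<forall>v w. (\<forall>i<k. v i = w i) \<longrightarrow> A v = A w) \<and>
     (\<forall>i<k. \<forall>v. linear (\<lambda>a. A (v(i := a)))) \<and>
     (\<forall>\<pi> v. \<pi> permutes {..<k} \<longrightarrow> A (v \<circ> \<pi>) = A v)"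

text \<open>The integer m with 0 < gamma - m \<le> 1.\<close>
definition lip_deg :: "real \<Rightarrow> nat" where
  "lip_deg \<gamma> = nat (\<lceil>\<gamma>\<rceil> - 1)"

definition lip_rem :: "nat \<Rightarrow> (nat \<Rightarrow> 'e::real_normed_vector \<Rightarrow> (nat \<Rightarrow> 'e) \<Rightarrow> 'w::real_normed_vector)
    \<Rightarrow> nat \<Rightarrow> 'e \<Rightarrow> 'e \<Rightarrow> (nat \<Rightarrow> 'e) \<Rightarrow> 'w" where
  "lip_rem m g k x y v =
     g k x v - (\<Sum>j=k..m. (1 / fact (j - k)) *\<^sub>R g j y (\<lambda>i. if i < k then v i else x - y))"

definition lip_coll :: "real \<Rightarrow> real \<Rightarrow> 'e::real_normed_vector set
    \<Rightarrow> (nat \<Rightarrow> 'e \<Rightarrow> (nat \<Rightarrow> 'e) \<Rightarrow> 'w::real_normed_vector) \<Rightarrow> bool" where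
  "lip_coll \<gamma> M U g \<longleftrightarrow>
     (\<forall>k\<le>lip_deg \<gamma>.
        (\<forall>x\<in>U. multilin_sym k (g k x)) \<and>
        (\<forall>x\<in>U. \<forall>v. norm (g k x v) \<le> M * (\<Prod>i<k. norm (v i))) \<and>
        (\<forall>x\<in>U. \<forall>y\<in>U. \<forall>v. norm (lip_rem (lip_deg \<gamma>) g k x y v)
              \<le> M * norm (x - y) powr (\<gamma> - real k) * (\<Prod>i<k. norm (v i))))"

definition lip_gamma_on :: "real \<Rightarrow> real \<Rightarrow> 'e::real_normed_vector set
    \<Rightarrow> ('e \<Rightarrow> 'w::real_normed_vector) \<Rightarrow> bool" where
  "lip_gamma_on \<gamma> M U f \<longleftrightarrow>
     (\<exists>g. lip_coll \<gamma> M U g \<and> (\<forall>x\<in>U. \<forall>v. g 0 x v = f x))"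

definition lattice_I :: "(real^'n) set" where
  "lattice_I = {x. \<forall>i. \<exists>k::int. x $ i = of_int k / sqrt (real CARD('n))}"

end

theory Submission
  imports Defs
begin

(* Since F is a homeomorphism onto V and phi is the identity on the unit ball, the inverse of the
   chart at x, restricted to B(0,1), is z \<mapsto> F (z + x).  So the maps to be controlled are translates
   of the single map f \<circ> F on R^p, and the theorem reduces to a chain rule: the composite of two
   Lip-gamma maps is Lip-gamma.

   The derivatives of f \<circ> F are defined by the Faa di Bruno formula from the jets (a^j) of f and
   (b^i) of F.  On the diagonal,
   s \<mapsto> \<Sum>_k s^k R_k(x,y)(t,...,t)/k! is the difference of the Taylor polynomials of f \<circ> F at x and
   at y, and comparing both with "Taylor polynomial of f applied to Taylor polynomial of F" shows
   that it is O(|x-y|^gamma) for |t| \<le> |x-y| \<le> 1/2.  A polynomial bounded on [0,1] has bounded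
   coefficients (Lagrange interpolation), which bounds each R_k(x,y) on the diagonal.  Finally,
   polarization bounds a symmetric multilinear map by its values on the diagonal.  For
   |x-y| \<ge> 1/2 the bounds on the jets themselves suffice. *)

section \<open>Multilinear maps\<close>

definition multilin :: "nat \<Rightarrow> ((nat \<Rightarrow> 'e::real_vector) \<Rightarrow> 'w::real_vector) \<Rightarrow> bool" where
  "multilin k A \<longleftrightarrow>
     (\<forall>v w. (\<forall>i<k. v i = w i) \<longrightarrow> A v = A w) \<and> (\<forall>i<k. \<forall>v. linear (\<lambda>a. A (v(i := a))))"

lemma multilin_sym_iff:
  "multilin_sym k A \<longleftrightarrow> multilin k A \<and> (\<forall>\<pi> v. \<pi> permutes {..<k} \<longrightarrow> A (v \<circ> \<pi>) = A v)"
  unfolding multilin_sym_def multilin_def by blast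

lemma multilin_sym_multilin: "multilin_sym k A \<Longrightarrow> multilin k A"
  by (simp add: multilin_sym_iff)

lemma multilin_sym_permute: "multilin_sym k A \<Longrightarrow> \<pi> permutes {..<k} \<Longrightarrow> A (v \<circ> \<pi>) = A v"
  by (simp add: multilin_sym_iff)

lemma multilin_cong: "multilin k A \<Longrightarrow> (\<And>i. i < k \<Longrightarrow> v i = w i) \<Longrightarrow> A v = A w"
  unfolding multilin_def by blast

lemma multilin_linear: "multilin k A \<Longrightarrow> i < k \<Longrightarrow> linear (\<lambda>a. A (v(i := a)))"
  unfolding multilin_def by blast

lemma multilin_add: "multilin k A \<Longrightarrow> i < k \<Longrightarrow> A (v(i := a + b)) = A (v(i := a)) + A (v(i := b))"
  using linear_add[OF multilin_linear[of k A i v]] by simp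

lemma multilin_diff: "multilin k A \<Longrightarrow> i < k \<Longrightarrow> A (v(i := a - b)) = A (v(i := a)) - A (v(i := b))"
  using linear_diff[OF multilin_linear[of k A i v]] by simp

lemma multilin_scaleR: "multilin k A \<Longrightarrow> i < k \<Longrightarrow> A (v(i := c *\<^sub>R a)) = c *\<^sub>R A (v(i := a))"
  using linear_cmul[OF multilin_linear[of k A i v]] by simp

lemma multilin_sum:
  "multilin k A \<Longrightarrow> i < k \<Longrightarrow> A (v(i := (\<Sum>s\<in>S. g s))) = (\<Sum>s\<in>S. A (v(i := g s)))"
  using linear_sum[OF multilin_linear[of k A i v]] by simp

lemma multilin_zero: "multilin k A \<Longrightarrow> i < k \<Longrightarrow> v i = 0 \<Longrightarrow> A v = 0"
proof -
  assume A: "multilin k A" "i < k" "v i = 0"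
  have "A v = A (v(i := 0))" using A by (intro multilin_cong[OF A(1)]) auto
  also have "\<dots> = 0" using linear_0[OF multilin_linear[OF A(1) A(2), of v]] by simp
  finally show ?thesis .
qed

lemma multilin_scaleR_prefix:
  assumes "multilin k A" "n \<le> k"
  shows "A (\<lambda>l. if l < n then c l *\<^sub>R u l else u l) = (\<Prod>l<n. c l) *\<^sub>R A u"
  using assms(2)
proof (induction n)
  case 0
  then show ?case by simp
next
  case (Suc n)
  have "(\<lambda>l. if l < Suc n then c l *\<^sub>R u l else u l) =
        (\<lambda>l. if l < n then c l *\<^sub>R u l else u l)(n := c n *\<^sub>R u n)"
    and "(\<lambda>l. if l < n then c l *\<^sub>R u l else u l)(n := u n) = (\<lambda>l. if l < n then c l *\<^sub>R u l else u l)"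
    by (auto simp: fun_eq_iff)
  with Suc show ?case by (simp only: multilin_scaleR[OF assms(1)]) (simp add: mult.commute)
qed

lemma multilin_scaleR_all:
  assumes "multilin k A"
  shows "A (\<lambda>l. c l *\<^sub>R u l) = (\<Prod>l<k. c l) *\<^sub>R A u"
proof -
  have "A (\<lambda>l. c l *\<^sub>R u l) = A (\<lambda>l. if l < k then c l *\<^sub>R u l else u l)"
    by (rule multilin_cong[OF assms]) auto
  then show ?thesis using multilin_scaleR_prefix[OF assms order_refl] by simp
qed

lemma multilin_scaleR_diag:
  assumes "multilin k A"
  shows "A (\<lambda>l. c *\<^sub>R u l) = c ^ k *\<^sub>R A u"
  using multilin_scaleR_all[OF assms, of "\<lambda>_. c" u] by simp

lemma sum_binomial_pascal:
  fixes g :: "nat \<Rightarrow> 'a::real_vector"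
  shows "(\<Sum>K\<le>n. real (n choose K) *\<^sub>R g (Suc K)) + (\<Sum>K\<le>n. real (n choose K) *\<^sub>R g K) =
    (\<Sum>K\<le>Suc n. real (Suc n choose K) *\<^sub>R g K)"
proof -
  have Suc_n: "(\<Sum>K\<le>Suc n. real (Suc n choose K) *\<^sub>R g K) =
      g 0 + (\<Sum>K\<le>n. real (Suc n choose Suc K) *\<^sub>R g (Suc K))"
    by (simp only: sum.atMost_Suc_shift) (simp del: sum.atMost_Suc binomial_Suc_Suc)
  have "(\<Sum>K\<le>n. real (n choose K) *\<^sub>R g K) = (\<Sum>K\<le>Suc n. real (n choose K) *\<^sub>R g K)"
    by simp
  also have "\<dots> = g 0 + (\<Sum>K\<le>n. real (n choose Suc K) *\<^sub>R g (Suc K))"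
    by (simp only: sum.atMost_Suc_shift) (simp del: sum.atMost_Suc)
  finally show ?thesis unfolding Suc_n by (simp add: sum.distrib scaleR_add_left del: sum.atMost_Suc)
qed

lemma multilin_sym_binomial:
  assumes "multilin_sym k A" "n \<le> k"
  shows "A (\<lambda>l. if l < n then t + d else u l) =
    (\<Sum>K\<le>n. real (n choose K) *\<^sub>R A (\<lambda>l. if l < K then t else if l < n then d else u l))"
  using assms(2)
proof (induction n arbitrary: u)
  case 0
  then show ?case by simp
next
  case (Suc n)
  have ml: "multilin k A" using multilin_sym_multilin[OF assms(1)] .
  have nk: "n < k" using Suc by simp
  define S where "S u' = (\<lambda>l. if l < n then t + d else u' l)" for u'
  define g where "g K = A (\<lambda>l. if l < K then t else if l < Suc n then d else u l)" for K
  have first: "A (S (u(n := t))) = (\<Sum>K\<le>n. real (n choose K) *\<^sub>R g (Suc K))"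
  proof -
    have "A (S (u(n := t))) =
        (\<Sum>K\<le>n. real (n choose K) *\<^sub>R A (\<lambda>l. if l < K then t else if l < n then d else (u(n := t)) l))"
      unfolding S_def using Suc by simp
    also have "\<dots> = (\<Sum>K\<le>n. real (n choose K) *\<^sub>R g (Suc K))"
    proof (intro sum.cong refl arg_cong2[where f = scaleR])
      fix K assume "K \<in> {..n}"
      define w where "w = (\<lambda>l. if l < K then t else if l < n then d else (u(n := t)) l)"
      have "A w = A (w \<circ> Transposition.transpose K n)"
        using multilin_sym_permute[OF assms(1), of "Transposition.transpose K n" w] \<open>K \<in> {..n}\<close> nk
          permutes_swap_id[of K "{..<k}" n] by simp
      also have "w \<circ> Transposition.transpose K n = (\<lambda>l. if l < Suc K then t else if l < Suc n then d else u l)"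
        using \<open>K \<in> {..n}\<close> by (auto simp: w_def fun_eq_iff Transposition.transpose_def)
      finally show "A w = g (Suc K)" by (simp add: g_def)
    qed
    finally show ?thesis .
  qed
  have second: "A (S (u(n := d))) = (\<Sum>K\<le>n. real (n choose K) *\<^sub>R g K)"
    unfolding S_def using Suc
    by (simp add: g_def, intro sum.cong refl arg_cong[where f = "\<lambda>z. _ *\<^sub>R A z"] ext) auto
  have "A (\<lambda>l. if l < Suc n then t + d else u l) = A ((S u)(n := t + d))"
    by (rule arg_cong[where f = A]) (auto simp: S_def fun_eq_iff)
  also have "\<dots> = A ((S u)(n := t)) + A ((S u)(n := d))" using multilin_add[OF ml nk] by simp
  also have "A ((S u)(n := t)) = A (S (u(n := t)))"
    by (rule arg_cong[where f = A]) (auto simp: S_def fun_eq_iff)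
  also have "A ((S u)(n := d)) = A (S (u(n := d)))"
    by (rule arg_cong[where f = A]) (auto simp: S_def fun_eq_iff)
  finally show ?case unfolding first second sum_binomial_pascal by (simp only: g_def)
qed

lemma multilin_sym_diag_add:
  assumes "multilin_sym j A"
  shows "A (\<lambda>_. t + d) = (\<Sum>K\<le>j. real (j choose K) *\<^sub>R A (\<lambda>l. if l < K then t else d))"
proof -
  have ml: "multilin j A" using multilin_sym_multilin[OF assms] .
  have "A (\<lambda>_. t + d) = A (\<lambda>l. if l < j then t + d else 0)"
    by (rule multilin_cong[OF ml]) simp
  also have "\<dots> = (\<Sum>K\<le>j. real (j choose K) *\<^sub>R A (\<lambda>l. if l < K then t else if l < j then d else 0))"
    by (rule multilin_sym_binomial[OF assms order_refl])
  also have "\<dots> = (\<Sum>K\<le>j. real (j choose K) *\<^sub>R A (\<lambda>l. if l < K then t else d))"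
    by (intro sum.cong refl arg_cong2[where f = scaleR] multilin_cong[OF ml]) auto
  finally show ?thesis .
qed

lemma multilin_expand_sums:
  assumes "multilin k A" "n \<le> k"
  shows "A (\<lambda>l. if l < n then (\<Sum>s\<in>S. q l s) else u l) =
    (\<Sum>\<iota>\<in>{..<n} \<rightarrow>\<^sub>E S. A (\<lambda>l. if l < n then q l (\<iota> l) else u l))"
  using assms(2)
proof (induction n arbitrary: u)
  case 0
  then show ?case by simp
next
  case (Suc n)
  have nk: "n < k" using Suc by simp
  have "A (\<lambda>l. if l < Suc n then (\<Sum>s\<in>S. q l s) else u l) =
      A (\<lambda>l. if l < n then (\<Sum>s\<in>S. q l s) else (u(n := (\<Sum>s\<in>S. q n s))) l)"
    by (rule arg_cong[where f = A]) (auto simp: fun_eq_iff)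
  also have "\<dots> = (\<Sum>\<iota>\<in>{..<n} \<rightarrow>\<^sub>E S. A (\<lambda>l. if l < n then q l (\<iota> l) else (u(n := (\<Sum>s\<in>S. q n s))) l))"
    using Suc by simp
  also have "\<dots> = (\<Sum>\<iota>\<in>{..<n} \<rightarrow>\<^sub>E S. \<Sum>s\<in>S. A (\<lambda>l. if l < Suc n then q l ((\<iota>(n := s)) l) else u l))"
  proof (rule sum.cong[OF refl])
    fix \<iota>
    have "A (\<lambda>l. if l < n then q l (\<iota> l) else (u(n := (\<Sum>s\<in>S. q n s))) l) =
        A ((\<lambda>l. if l < n then q l (\<iota> l) else u l)(n := (\<Sum>s\<in>S. q n s)))"
      by (rule arg_cong[where f = A]) (auto simp: fun_eq_iff)
    also have "\<dots> = (\<Sum>s\<in>S. A ((\<lambda>l. if l < n then q l (\<iota> l) else u l)(n := q n s)))"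
      by (rule multilin_sum[OF assms(1) nk])
    also have "\<dots> = (\<Sum>s\<in>S. A (\<lambda>l. if l < Suc n then q l ((\<iota>(n := s)) l) else u l))"
      by (intro sum.cong refl arg_cong[where f = A]) (auto simp: fun_eq_iff)
    finally show "A (\<lambda>l. if l < n then q l (\<iota> l) else (u(n := (\<Sum>s\<in>S. q n s))) l) = \<dots>" .
  qed
  also have "\<dots> = (\<Sum>p\<in>S \<times> ({..<n} \<rightarrow>\<^sub>E S). A (\<lambda>l. if l < Suc n then q l (((snd p)(n := fst p)) l) else u l))"
    by (subst sum.swap) (simp add: sum.cartesian_product split_def)
  also have "\<dots> = (\<Sum>\<iota>\<in>{..<Suc n} \<rightarrow>\<^sub>E S. A (\<lambda>l. if l < Suc n then q l (\<iota> l) else u l))"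
  proof -
    have eq: "{..<Suc n} \<rightarrow>\<^sub>E S = (\<lambda>(s, \<iota>). \<iota>(n := s)) ` (S \<times> ({..<n} \<rightarrow>\<^sub>E S))"
      using PiE_insert_eq[of n "{..<n}" "\<lambda>_. S"] by (simp add: lessThan_Suc)
    have inj: "inj_on (\<lambda>(s, \<iota>). \<iota>(n := s)) (S \<times> ({..<n} \<rightarrow>\<^sub>E S))"
      using inj_combinator[of n "{..<n}" "\<lambda>_. S"] by simp
    show ?thesis unfolding eq by (subst sum.reindex[OF inj]) (simp only: o_def case_prod_beta)
  qed
  finally show ?case .
qed

lemma multilin_diag_lipschitz:
  assumes "multilin k A" "\<And>v. norm (A v) \<le> M * (\<Prod>i<k. norm (v i))" "M \<ge> 0"
    "norm u \<le> R" "norm u' \<le> R"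
  shows "norm (A (\<lambda>_. u) - A (\<lambda>_. u')) \<le> real k * (M * R ^ (k - 1) * norm (u - u'))"
proof -
  define S where "S i = (\<lambda>l::nat. if l < i then u else u')" for i
  have "A (\<lambda>_. u) - A (\<lambda>_. u') = A (S k) - A (S 0)"
    using multilin_cong[OF assms(1), of "S k" "\<lambda>_. u"] by (simp add: S_def)
  also have "\<dots> = (\<Sum>i<k. A (S (Suc i)) - A (S i))" by (rule sum_lessThan_telescope[symmetric])
  finally have telescope: "A (\<lambda>_. u) - A (\<lambda>_. u') = (\<Sum>i<k. A (S (Suc i)) - A (S i))" .
  have step: "norm (A (S (Suc i)) - A (S i)) \<le> M * R ^ (k - 1) * norm (u - u')" if i: "i < k" for i
  proof -
    have "A (S (Suc i)) - A (S i) = A ((S i)(i := u)) - A ((S i)(i := u'))"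
      by (intro arg_cong2[where f = "(-)"] arg_cong[where f = A]) (auto simp: S_def fun_eq_iff)
    also have "\<dots> = A ((S i)(i := u - u'))" using multilin_diff[OF assms(1) i] by simp
    finally have eq: "A (S (Suc i)) - A (S i) = A ((S i)(i := u - u'))" .
    have "(\<Prod>l<k. norm (((S i)(i := u - u')) l)) = norm (u - u') * (\<Prod>l\<in>{..<k} - {i}. norm (S i l))"
      using i by (subst prod.remove[of _ i]) (auto intro!: prod.cong)
    also have "\<dots> \<le> norm (u - u') * (\<Prod>l\<in>{..<k} - {i}. R)"
      by (intro mult_left_mono prod_mono) (use assms(4,5) in \<open>auto simp: S_def\<close>)
    also have "\<dots> = norm (u - u') * R ^ (k - 1)" using i by simp
    finally show ?thesis
      using eq assms(2)[of "(S i)(i := u - u')"] mult_left_mono[OF _ assms(3)] by (fastforce simp: mult_ac)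
  qed
  have "norm (\<Sum>i<k. A (S (Suc i)) - A (S i)) \<le> (\<Sum>i<k. M * R ^ (k - 1) * norm (u - u'))"
    by (rule sum_norm_le) (use step in auto)
  then show ?thesis using telescope by simp
qed

lemma multilin_sum_fun:
  fixes A :: "'s \<Rightarrow> (nat \<Rightarrow> 'e::real_vector) \<Rightarrow> 'w::real_vector"
  assumes "\<And>s. s \<in> S \<Longrightarrow> multilin k (A s)"
  shows "multilin k (\<lambda>v. \<Sum>s\<in>S. A s v)"
  unfolding multilin_def
proof (intro conjI allI impI)
  fix v w :: "nat \<Rightarrow> 'e" assume "\<forall>i<k. v i = w i"
  then show "(\<Sum>s\<in>S. A s v) = (\<Sum>s\<in>S. A s w)"
    using assms by (intro sum.cong refl) (auto intro: multilin_cong)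
next
  fix i v assume "i < k"
  then show "linear (\<lambda>a. \<Sum>s\<in>S. A s (v(i := a)))"
    using assms by (intro linear_compose_sum) (auto intro: multilin_linear)
qed

lemma multilin_scaleR_fun:
  fixes A :: "(nat \<Rightarrow> 'e::real_vector) \<Rightarrow> 'w::real_vector"
  assumes "multilin k A"
  shows "multilin k (\<lambda>v. c *\<^sub>R A v)"
  unfolding multilin_def
proof (intro conjI allI impI)
  fix v w :: "nat \<Rightarrow> 'e" assume "\<forall>i<k. v i = w i"
  then show "c *\<^sub>R A v = c *\<^sub>R A w" using multilin_cong[OF assms] by metis
next
  fix i v assume "i < k"
  then have "linear (\<lambda>a. A (v(i := a)))" by (rule multilin_linear[OF assms])
  then show "linear (\<lambda>a. c *\<^sub>R A (v(i := a)))"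
    using linear_compose[OF _ linear_scaleR, of "\<lambda>a. A (v(i := a))" c] by (simp add: o_def)
qed

lemma multilin_diff_fun:
  fixes A B :: "(nat \<Rightarrow> 'e::real_vector) \<Rightarrow> 'w::real_vector"
  assumes "multilin k A" "multilin k B"
  shows "multilin k (\<lambda>v. A v - B v)"
  unfolding multilin_def
proof (intro conjI allI impI)
  fix v w :: "nat \<Rightarrow> 'e" assume "\<forall>i<k. v i = w i"
  then show "A v - B v = A w - B w" using multilin_cong[OF assms(1)] multilin_cong[OF assms(2)] by metis
next
  fix i v assume "i < k"
  then show "linear (\<lambda>a. A (v(i := a)) - B (v(i := a)))"
    by (intro linear_compose_sub multilin_linear[OF assms(1)] multilin_linear[OF assms(2)])
qed

lemma multilin_permute_args:
  fixes A :: "(nat \<Rightarrow> 'e::real_vector) \<Rightarrow> 'w::real_vector"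
  assumes "multilin k A" "\<sigma> permutes {..<k}"
  shows "multilin k (\<lambda>v. A (v \<circ> \<sigma>))"
  unfolding multilin_def
proof (intro conjI allI impI)
  fix v w :: "nat \<Rightarrow> 'e" assume "\<forall>i<k. v i = w i"
  then show "A (v \<circ> \<sigma>) = A (w \<circ> \<sigma>)"
    using permutes_in_image[OF assms(2)] by (intro multilin_cong[OF assms(1)]) auto
next
  fix i v assume i: "i < k"
  have ii: "inv \<sigma> i < k" using i permutes_in_image[OF permutes_inv[OF assms(2)]] by auto
  have "(\<lambda>a. A (v(i := a) \<circ> \<sigma>)) = (\<lambda>a. A ((v \<circ> \<sigma>)(inv \<sigma> i := a)))"
    using permutes_inverses[OF assms(2)] by (intro ext arg_cong[where f = A]) (auto simp: fun_upd_def)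
  then show "linear (\<lambda>a. A (v(i := a) \<circ> \<sigma>))" using multilin_linear[OF assms(1) ii] by simp
qed

lemma multilin_fix_tail:
  fixes A :: "(nat \<Rightarrow> 'e::real_vector) \<Rightarrow> 'w::real_vector"
  assumes "multilin j A" "k \<le> j"
  shows "multilin k (\<lambda>v. A (\<lambda>l. if l < k then v l else u l))"
  unfolding multilin_def
proof (intro conjI allI impI)
  fix v w :: "nat \<Rightarrow> 'e" assume "\<forall>i<k. v i = w i"
  then show "A (\<lambda>l. if l < k then v l else u l) = A (\<lambda>l. if l < k then w l else u l)"
    by (intro multilin_cong[OF assms(1)]) auto
next
  fix i v assume i: "i < k"
  have "(\<lambda>a. A ((\<lambda>l. if l < k then v l else u l)(i := a))) = (\<lambda>a. A (\<lambda>l. if l < k then (v(i := a)) l else u l))"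
    using i by (intro ext arg_cong[where f = A]) (auto simp: fun_eq_iff)
  moreover have "linear (\<lambda>a. A ((\<lambda>l. if l < k then v l else u l)(i := a)))"
    using i assms(2) by (intro multilin_linear[OF assms(1)]) auto
  ultimately show "linear (\<lambda>a. A (\<lambda>l. if l < k then (v(i := a)) l else u l))" by simp
qed

lemma multilin_sym_fix_tail:
  assumes "multilin_sym j A" "k \<le> j"
  shows "multilin_sym k (\<lambda>v. A (\<lambda>l. if l < k then v l else u l))"
  unfolding multilin_sym_iff
proof (intro conjI allI impI)
  show "multilin k (\<lambda>v. A (\<lambda>l. if l < k then v l else u l))"
    by (rule multilin_fix_tail[OF multilin_sym_multilin[OF assms(1)] assms(2)])
next
  fix \<pi> v assume p: "\<pi> permutes {..<k}"
  have "A (\<lambda>l. if l < k then (v \<circ> \<pi>) l else u l) = A ((\<lambda>l. if l < k then v l else u l) \<circ> \<pi>)"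
    using permutes_in_image[OF p] permutes_not_in[OF p] by (intro arg_cong[where f = A]) auto
  also have "\<dots> = A (\<lambda>l. if l < k then v l else u l)"
    using p permutes_subset assms(2) by (intro multilin_sym_permute[OF assms(1)]) fastforce
  finally show "A (\<lambda>l. if l < k then (v \<circ> \<pi>) l else u l) = A (\<lambda>l. if l < k then v l else u l)" .
qed

lemma multilin_sym_sum_fun:
  assumes "\<And>s. s \<in> S \<Longrightarrow> multilin_sym k (A s)"
  shows "multilin_sym k (\<lambda>v. \<Sum>s\<in>S. A s v)"
proof -
  have "multilin k (\<lambda>v. \<Sum>s\<in>S. A s v)" using assms multilin_sym_multilin by (intro multilin_sum_fun) blast
  moreover have "(\<Sum>s\<in>S. A s (v \<circ> \<pi>)) = (\<Sum>s\<in>S. A s v)" if "\<pi> permutes {..<k}" for \<pi> v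
    using assms multilin_sym_permute that by (intro sum.cong) blast+
  ultimately show ?thesis unfolding multilin_sym_iff by blast
qed

lemma multilin_sym_scaleR_fun: "multilin_sym k A \<Longrightarrow> multilin_sym k (\<lambda>v. c *\<^sub>R A v)"
  using multilin_scaleR_fun unfolding multilin_sym_iff by auto

lemma multilin_sym_diff_fun:
  "multilin_sym k A \<Longrightarrow> multilin_sym k B \<Longrightarrow> multilin_sym k (\<lambda>v. A v - B v)"
  using multilin_diff_fun unfolding multilin_sym_iff by auto

section \<open>Coefficients of a polynomial bounded on the unit interval\<close>

definition lagrange_basis :: "(nat \<Rightarrow> real) \<Rightarrow> nat \<Rightarrow> nat \<Rightarrow> real poly" where
  "lagrange_basis x N j = smult (1 / (\<Prod>i\<in>{..N} - {j}. x j - x i)) (\<Prod>i\<in>{..N} - {j}. [:- x i, 1:])"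

lemma degree_lagrange_basis: "j \<le> N \<Longrightarrow> degree (lagrange_basis x N j) \<le> N"
proof -
  assume "j \<le> N"
  have "degree (\<Prod>i\<in>{..N} - {j}. [:- x i, 1:]) \<le> (\<Sum>i\<in>{..N} - {j}. degree [:- x i, 1:])"
    using degree_prod_sum_le[of "{..N} - {j}" "\<lambda>i. [:- x i, 1:]"] by (simp add: o_def)
  also have "\<dots> \<le> N" using \<open>j \<le> N\<close> by simp
  finally show ?thesis unfolding lagrange_basis_def using degree_smult_le order_trans by blast
qed

lemma poly_lagrange_basis:
  assumes "inj_on x {..N}" "j \<le> N" "l \<le> N"
  shows "poly (lagrange_basis x N j) (x l) = (if l = j then 1 else 0)"
proof (cases "l = j")
  case True
  have "(\<Prod>i\<in>{..N} - {j}. x j - x i) \<noteq> 0" using assms by (auto simp: inj_on_def)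
  then show ?thesis using True by (simp add: lagrange_basis_def poly_prod)
next
  case False
  then have "(\<Prod>i\<in>{..N} - {j}. poly [:- x i, 1:] (x l)) = 0" using assms by (intro prod_zero) auto
  then show ?thesis using False by (simp add: lagrange_basis_def poly_prod)
qed

lemma lagrange_interpolation_monom:
  assumes inj: "inj_on x {..N}" and "i \<le> N"
  shows "(\<Sum>j\<le>N. smult (x j ^ i) (lagrange_basis x N j)) = monom 1 i"
proof (rule ccontr)
  define D where "D = (\<Sum>j\<le>N. smult (x j ^ i) (lagrange_basis x N j)) - monom 1 i"
  assume "(\<Sum>j\<le>N. smult (x j ^ i) (lagrange_basis x N j)) \<noteq> monom 1 i"
  then have "D \<noteq> 0" by (simp add: D_def)
  have "degree (\<Sum>j\<le>N. smult (x j ^ i) (lagrange_basis x N j)) \<le> N"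
    by (rule degree_sum_le) (auto intro!: order_trans[OF degree_smult_le] degree_lagrange_basis)
  moreover have "degree (monom (1::real) i) \<le> N" using \<open>i \<le> N\<close> by (simp add: order_trans[OF degree_monom_le])
  ultimately have "degree D \<le> N" unfolding D_def using degree_diff_le by blast
  have "poly D (x l) = 0" if "l \<le> N" for l
    using that by (simp add: D_def poly_sum poly_monom poly_lagrange_basis[OF inj] if_distrib cong: if_cong)
  then have "x ` {..N} \<subseteq> {y. poly D y = 0}" by auto
  then have "card (x ` {..N}) \<le> card {y. poly D y = 0}"
    by (rule card_mono[OF poly_roots_finite[OF \<open>D \<noteq> 0\<close>]])
  moreover have "card (x ` {..N}) = Suc N" using inj by (simp add: card_image)
  ultimately show False using card_poly_roots_bound[OF \<open>D \<noteq> 0\<close>] \<open>degree D \<le> N\<close> by simp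
qed

lemma lagrange_basis_coeff_sum:
  assumes "inj_on x {..N}" "k \<le> N" "i \<le> N"
  shows "(\<Sum>j\<le>N. coeff (lagrange_basis x N j) k * x j ^ i) = (if i = k then 1 else 0)"
proof -
  have "(\<Sum>j\<le>N. coeff (lagrange_basis x N j) k * x j ^ i) = coeff (\<Sum>j\<le>N. smult (x j ^ i) (lagrange_basis x N j)) k"
    by (simp add: coeff_sum mult.commute)
  then show ?thesis using lagrange_interpolation_monom[OF assms(1,3)] by (simp add: coeff_monom)
qed

lemma poly_coeff_bound:
  "\<exists>K\<ge>0. \<forall>(c :: nat \<Rightarrow> 'w::real_normed_vector) B.
     (\<forall>s\<in>{0..1}. norm (\<Sum>i\<le>N. s ^ i *\<^sub>R c i) \<le> B) \<longrightarrow> (\<forall>k\<le>N. norm (c k) \<le> K * B)"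
proof -
  define x where "x j = real j / real (Suc N)" for j
  define w where "w k j = coeff (lagrange_basis x N j) k" for k j
  have "inj_on x {..N}" by (auto simp: inj_on_def x_def)
  then have w: "\<And>k i. k \<le> N \<Longrightarrow> i \<le> N \<Longrightarrow> (\<Sum>j\<le>N. w k j * x j ^ i) = (if i = k then 1 else 0)"
    unfolding w_def by (rule lagrange_basis_coeff_sum)
  define K where "K = (\<Sum>k\<le>N. \<Sum>j\<le>N. \<bar>w k j\<bar>)"
  show ?thesis
  proof (rule exI[of _ K], intro conjI allI impI)
    show "K \<ge> 0" unfolding K_def by (intro sum_nonneg) auto
    fix c :: "nat \<Rightarrow> 'w" and B k
    assume H: "\<forall>s\<in>{0..1}. norm (\<Sum>i\<le>N. s ^ i *\<^sub>R c i) \<le> B" and k: "k \<le> N"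
    have x_unit: "x j \<in> {0..1}" if "j \<le> N" for j using that by (simp add: x_def)
    have "norm (\<Sum>i\<le>N. (0::real) ^ i *\<^sub>R c i) \<le> B" using H by simp
    then have "0 \<le> B" using norm_ge_zero order_trans by blast
    have "(\<Sum>j\<le>N. w k j *\<^sub>R (\<Sum>i\<le>N. x j ^ i *\<^sub>R c i)) = (\<Sum>i\<le>N. (\<Sum>j\<le>N. w k j * x j ^ i) *\<^sub>R c i)"
      by (simp add: scaleR_sum_right scaleR_sum_left scaleR_scaleR, subst sum.swap, simp)
    also have "\<dots> = (\<Sum>i\<le>N. (if i = k then c i else 0))"
      by (rule sum.cong[OF refl], subst w[OF k], auto)
    also have "\<dots> = c k" using k by simp
    finally have ck: "c k = (\<Sum>j\<le>N. w k j *\<^sub>R (\<Sum>i\<le>N. x j ^ i *\<^sub>R c i))" by simp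
    have "norm (c k) \<le> (\<Sum>j\<le>N. \<bar>w k j\<bar> * B)"
      unfolding ck by (rule order_trans[OF norm_sum sum_mono]) (auto intro!: mult_left_mono H[rule_format] x_unit)
    also have "\<dots> = (\<Sum>j\<le>N. \<bar>w k j\<bar>) * B" by (simp add: sum_distrib_right)
    also have "\<dots> \<le> K * B"
    proof (rule mult_right_mono[OF _ \<open>0 \<le> B\<close>])
      show "(\<Sum>j\<le>N. \<bar>w k j\<bar>) \<le> K"
        unfolding K_def using k by (intro member_le_sum) (auto intro: sum_nonneg)
    qed
    finally show "norm (c k) \<le> K * B" .
  qed
qed

section \<open>Polarization\<close>

lemma multilin_sym_mixed_le_diag:
  fixes A :: "(nat \<Rightarrow> 'e::real_normed_vector) \<Rightarrow> 'w::real_normed_vector"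
  assumes sym: "multilin_sym (Suc k) A" and "c \<ge> 0"
    and diag: "\<And>w. norm (A (\<lambda>_. w)) \<le> c * norm w ^ Suc k"
    and coeff: "\<forall>(cc :: nat \<Rightarrow> 'w) B. (\<forall>s\<in>{0..1}. norm (\<Sum>i\<le>Suc k. s ^ i *\<^sub>R cc i) \<le> B) \<longrightarrow>
      (\<forall>i\<le>Suc k. norm (cc i) \<le> K * B)"
    and "norm u = norm w"
  shows "norm (A (\<lambda>l. if l < k then w else u)) \<le> K * (c * (2 * norm w) ^ Suc k)"
proof -
  have ml: "multilin (Suc k) A" using multilin_sym_multilin[OF sym] .
  \<comment> \<open>the mixed value is, up to the factor k+1, the coefficient of s in s \<mapsto> A (s u + w, ..., s u + w)\<close>
  define cc where "cc i = real (Suc k choose i) *\<^sub>R A (\<lambda>l. if l < i then u else w)" for i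
  have binomial: "A (\<lambda>_. s *\<^sub>R u + w) = (\<Sum>i\<le>Suc k. s ^ i *\<^sub>R cc i)" for s
  proof -
    have "A (\<lambda>l. if l < i then s *\<^sub>R u else w) = s ^ i *\<^sub>R A (\<lambda>l. if l < i then u else w)" if "i \<le> Suc k" for i
      using multilin_scaleR_prefix[OF ml that, of "\<lambda>_. s" "\<lambda>l. if l < i then u else w"]
      by (simp add: if_distrib[of "scaleR s"] cong: if_cong)
    then show ?thesis unfolding multilin_sym_diag_add[OF sym] cc_def by (intro sum.cong) auto
  qed
  have "\<forall>s\<in>{0..1}. norm (\<Sum>i\<le>Suc k. s ^ i *\<^sub>R cc i) \<le> c * (2 * norm w) ^ Suc k"
  proof
    fix s :: real assume s: "s \<in> {0..1}"
    have "norm (s *\<^sub>R u + w) \<le> 2 * norm w"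
      using s \<open>norm u = norm w\<close> norm_triangle_ineq[of "s *\<^sub>R u" w] mult_left_le_one_le[of "norm w" s] by auto
    then have "c * norm (s *\<^sub>R u + w) ^ Suc k \<le> c * (2 * norm w) ^ Suc k"
      using \<open>c \<ge> 0\<close> by (intro mult_left_mono power_mono) auto
    then show "norm (\<Sum>i\<le>Suc k. s ^ i *\<^sub>R cc i) \<le> c * (2 * norm w) ^ Suc k"
      using diag[of "s *\<^sub>R u + w"] binomial[of s] by simp
  qed
  then have "norm (cc 1) \<le> K * (c * (2 * norm w) ^ Suc k)" using coeff by simp
  moreover have "cc 1 = real (Suc k) *\<^sub>R A (\<lambda>l. if l < k then w else u)"
  proof -
    have "A (\<lambda>l. if l < 1 then u else w) = A ((\<lambda>l. if l < k then w else u) \<circ> Transposition.transpose 0 k)"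
      by (rule multilin_cong[OF ml]) (auto simp: Transposition.transpose_def)
    also have "\<dots> = A (\<lambda>l. if l < k then w else u)"
      by (rule multilin_sym_permute[OF sym]) (rule permutes_swap_id, auto)
    finally show ?thesis by (simp add: cc_def)
  qed
  ultimately have "real (Suc k) * norm (A (\<lambda>l. if l < k then w else u)) \<le> K * (c * (2 * norm w) ^ Suc k)"
    by simp
  then show ?thesis by (rule order_trans[rotated]) (simp add: mult_le_cancel_right1)
qed

lemma multilin_sym_mixed_le:
  fixes A :: "(nat \<Rightarrow> 'e::real_normed_vector) \<Rightarrow> 'w::real_normed_vector"
  assumes sym: "multilin_sym (Suc k) A" and "c \<ge> 0" and "K \<ge> 0"
    and diag: "\<And>w. norm (A (\<lambda>_. w)) \<le> c * norm w ^ Suc k"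
    and coeff: "\<forall>(cc :: nat \<Rightarrow> 'w) B. (\<forall>s\<in>{0..1}. norm (\<Sum>i\<le>Suc k. s ^ i *\<^sub>R cc i) \<le> B) \<longrightarrow>
      (\<forall>i\<le>Suc k. norm (cc i) \<le> K * B)"
  shows "norm (A (\<lambda>l. if l < k then w else u)) \<le> K * 2 ^ Suc k * c * norm u * norm w ^ k"
proof -
  have ml: "multilin (Suc k) A" using multilin_sym_multilin[OF sym] .
  note mixed = multilin_sym_mixed_le_diag[OF sym \<open>c \<ge> 0\<close> diag coeff]
  consider "k = 0" | "u = 0" | "w = 0" "k > 0" | "u \<noteq> 0" "w \<noteq> 0" by blast
  then show ?thesis
  proof cases
    case 1
    then show ?thesis using mixed[of u u] by simp
  next
    case 2
    then have "A (\<lambda>l. if l < k then w else u) = 0" by (intro multilin_zero[OF ml, of k]) auto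
    then show ?thesis using 2 by simp
  next
    case 3
    then have "A (\<lambda>l. if l < k then w else u) = 0" by (intro multilin_zero[OF ml, of 0]) auto
    then show ?thesis using 3 by (simp add: zero_power)
  next
    case 4
    define u' where "u' = (norm w / norm u) *\<^sub>R u"
    have "norm u' = norm w" using 4 by (simp add: u'_def)
    have "A (\<lambda>l. if l < k then w else u) = A ((\<lambda>l. if l < k then w else u')(k := (norm u / norm w) *\<^sub>R u'))"
      using 4 by (intro multilin_cong[OF ml]) (auto simp: u'_def)
    also have "\<dots> = (norm u / norm w) *\<^sub>R A (\<lambda>l. if l < k then w else u')"
      using multilin_scaleR[OF ml, of k] by (simp add: fun_upd_idem)
    finally have "norm (A (\<lambda>l. if l < k then w else u)) = (norm u / norm w) * norm (A (\<lambda>l. if l < k then w else u'))"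
      by simp
    also have "\<dots> \<le> (norm u / norm w) * (K * (c * (2 * norm w) ^ Suc k))"
      using mixed[OF \<open>norm u' = norm w\<close>] by (intro mult_left_mono) auto
    also have "\<dots> = K * 2 ^ Suc k * c * norm u * norm w ^ k"
      using 4 by (simp add: power_mult_distrib field_simps)
    finally show ?thesis .
  qed
qed

lemma multilin_sym_polarization:
  "\<exists>K\<ge>0. \<forall>(A :: (nat \<Rightarrow> 'e::real_normed_vector) \<Rightarrow> 'w::real_normed_vector) c v.
     multilin_sym k A \<longrightarrow> c \<ge> 0 \<longrightarrow> (\<forall>w. norm (A (\<lambda>_. w)) \<le> c * norm w ^ k) \<longrightarrow>
     norm (A v) \<le> K * c * (\<Prod>i<k. norm (v i))"
proof (induction k)
  case 0
  show ?case
  proof (rule exI[of _ 1], intro conjI allI impI)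
    fix A :: "(nat \<Rightarrow> 'e) \<Rightarrow> 'w" and c :: real and v
    assume "multilin_sym 0 A" and diag: "\<forall>w. norm (A (\<lambda>_. w)) \<le> c * norm w ^ 0"
    have "A v = A (\<lambda>_. 0)" by (rule multilin_cong[OF multilin_sym_multilin[OF \<open>multilin_sym 0 A\<close>]]) auto
    then show "norm (A v) \<le> 1 * c * (\<Prod>i<0. norm (v i))" using diag by simp
  qed simp
next
  case (Suc k)
  obtain Kk where "Kk \<ge> 0" and Kk: "\<And>(A :: (nat \<Rightarrow> 'e) \<Rightarrow> 'w) c v. multilin_sym k A \<Longrightarrow> c \<ge> 0 \<Longrightarrow>
     \<forall>w. norm (A (\<lambda>_. w)) \<le> c * norm w ^ k \<Longrightarrow> norm (A v) \<le> Kk * c * (\<Prod>i<k. norm (v i))"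
    using Suc.IH by blast
  obtain KM where "KM \<ge> 0" and coeff: "\<forall>(cc :: nat \<Rightarrow> 'w) B.
      (\<forall>s\<in>{0..1}. norm (\<Sum>i\<le>Suc k. s ^ i *\<^sub>R cc i) \<le> B) \<longrightarrow> (\<forall>i\<le>Suc k. norm (cc i) \<le> KM * B)"
    using poly_coeff_bound by blast
  show ?case
  proof (rule exI[of _ "Kk * KM * 2 ^ Suc k"], intro conjI allI impI)
    show "Kk * KM * 2 ^ Suc k \<ge> 0" using \<open>Kk \<ge> 0\<close> \<open>KM \<ge> 0\<close> by simp
    fix A :: "(nat \<Rightarrow> 'e) \<Rightarrow> 'w" and c :: real and v
    assume sym: "multilin_sym (Suc k) A" and "c \<ge> 0" and diag: "\<forall>w. norm (A (\<lambda>_. w)) \<le> c * norm w ^ Suc k"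
    \<comment> \<open>freezing the last argument leaves a symmetric k-linear map, whose diagonal is bounded by
      multilin_sym_mixed_le\<close>
    define B where "B v' = A (\<lambda>l. if l < k then v' l else v k)" for v'
    have "multilin_sym k B" unfolding B_def by (rule multilin_sym_fix_tail[OF sym, of k]) simp
    moreover have "\<forall>w. norm (B (\<lambda>_. w)) \<le> (KM * 2 ^ Suc k * c * norm (v k)) * norm w ^ k"
      unfolding B_def using multilin_sym_mixed_le[OF sym \<open>c \<ge> 0\<close> \<open>KM \<ge> 0\<close> _ coeff] diag by auto
    ultimately have "norm (B v) \<le> Kk * (KM * 2 ^ Suc k * c * norm (v k)) * (\<Prod>i<k. norm (v i))"
      using \<open>KM \<ge> 0\<close> \<open>c \<ge> 0\<close> by (intro Kk) auto
    moreover have "A v = B v" unfolding B_def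
      by (rule multilin_cong[OF multilin_sym_multilin[OF sym]]) (auto simp: less_Suc_eq)
    ultimately show "norm (A v) \<le> Kk * KM * 2 ^ Suc k * c * (\<Prod>i<Suc k. norm (v i))"
      by (simp add: mult_ac)
  qed
qed

section \<open>Elementary facts on Lip-gamma collections\<close>

lemma lip_deg_bounds:
  assumes "\<gamma> \<ge> 1"
  shows "real (lip_deg \<gamma>) < \<gamma>" "\<gamma> \<le> real (lip_deg \<gamma>) + 1"
proof -
  have "\<lceil>\<gamma>\<rceil> \<ge> 1" using assms by (simp add: one_le_ceiling)
  then have "real (lip_deg \<gamma>) = real_of_int \<lceil>\<gamma>\<rceil> - 1" unfolding lip_deg_def by simp
  then show "real (lip_deg \<gamma>) < \<gamma>" "\<gamma> \<le> real (lip_deg \<gamma>) + 1"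
    using ceiling_correct[of \<gamma>] by linarith+
qed

lemma lip_coll_mono:
  assumes "lip_coll \<gamma> M U g" "M \<le> M'"
  shows "lip_coll \<gamma> M' U g"
  unfolding lip_coll_def
proof (intro allI impI conjI ballI)
  fix k x v assume k: "k \<le> lip_deg \<gamma>" and x: "x \<in> U"
  show "multilin_sym k (g k x)" using assms(1) k x unfolding lip_coll_def by blast
  have "norm (g k x v) \<le> M * (\<Prod>i<k. norm (v i))" using assms(1) k x unfolding lip_coll_def by blast
  also have "\<dots> \<le> M' * (\<Prod>i<k. norm (v i))" using assms(2) by (intro mult_right_mono prod_nonneg) auto
  finally show "norm (g k x v) \<le> M' * (\<Prod>i<k. norm (v i))" .
  fix y assume y: "y \<in> U"
  have "norm (lip_rem (lip_deg \<gamma>) g k x y v) \<le> M * norm (x - y) powr (\<gamma> - real k) * (\<Prod>i<k. norm (v i))"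
    using assms(1) k x y unfolding lip_coll_def by blast
  also have "\<dots> \<le> M' * norm (x - y) powr (\<gamma> - real k) * (\<Prod>i<k. norm (v i))"
    using assms(2) by (intro mult_right_mono prod_nonneg) auto
  finally show "norm (lip_rem (lip_deg \<gamma>) g k x y v) \<le> M' * norm (x - y) powr (\<gamma> - real k) * (\<Prod>i<k. norm (v i))" .
qed

lemma lip_coll_translate:
  fixes g :: "nat \<Rightarrow> 'e::real_normed_vector \<Rightarrow> (nat \<Rightarrow> 'e) \<Rightarrow> 'w::real_normed_vector"
  assumes "lip_coll \<gamma> M UNIV g"
  shows "lip_coll \<gamma> M S (\<lambda>k z. g k (z + a))"
proof -
  have "lip_rem m (\<lambda>k z. g k (z + a)) k z z' v = lip_rem m g k (z + a) (z' + a) v" for m k z z' v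
  proof -
    have shift: "z + a - (z' + a) = (z - z' :: 'e)" by simp
    show ?thesis unfolding lip_rem_def shift ..
  qed
  moreover have "norm ((x + a) - (y + a)) = norm (x - y)" for x y :: 'e by simp
  ultimately show ?thesis using assms unfolding lip_coll_def by (metis UNIV_I)
qed

lemma lip_rem_self:
  assumes "k \<le> m" and "\<And>j. j \<le> m \<Longrightarrow> multilin j (g j x)"
  shows "lip_rem m g k x x v = 0"
proof -
  have "g j x (\<lambda>i. if i < k then v i else x - x) = 0" if "j \<in> {Suc k..m}" for j
    using that by (intro multilin_zero[OF assms(2), of j k]) auto
  then have "(\<Sum>j=Suc k..m. (1 / fact (j - k)) *\<^sub>R g j x (\<lambda>i. if i < k then v i else x - x)) = 0"
    by (intro sum.neutral) simp
  moreover have "g k x (\<lambda>i. if i < k then v i else x - x) = g k x v"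
    by (rule multilin_cong[OF assms(2)[OF \<open>k \<le> m\<close>]]) simp
  ultimately show ?thesis unfolding lip_rem_def sum.atLeast_Suc_atMost[OF \<open>k \<le> m\<close>] by simp
qed

lemma multilin_sym_lip_rem:
  assumes "k \<le> m" and "multilin_sym k (g k x)" and "\<And>j. j \<le> m \<Longrightarrow> multilin_sym j (g j y)"
  shows "multilin_sym k (lip_rem m g k x y)"
proof -
  have "lip_rem m g k x y = (\<lambda>v. g k x v -
      (\<Sum>j\<in>{k..m}. (1 / fact (j - k)) *\<^sub>R g j y (\<lambda>i. if i < k then v i else (\<lambda>_. x - y) i)))"
    by (simp add: lip_rem_def fun_eq_iff)
  then show ?thesis using assms
    by (simp only:) (intro multilin_sym_diff_fun multilin_sym_sum_fun multilin_sym_scaleR_fun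
        multilin_sym_fix_tail, auto)
qed

lemma sum_triangle_swap:
  "(\<Sum>j\<le>(m::nat). \<Sum>K\<le>j. f j K) = (\<Sum>K\<le>m. \<Sum>j\<in>{K..m}. f j K)"
proof -
  have "(\<Sum>j\<le>m. \<Sum>K\<le>j. f j K) = (\<Sum>j\<le>m. \<Sum>K\<in>{K. K \<in> {..m} \<and> K \<le> j}. f j K)"
    by (intro sum.cong) auto
  also have "\<dots> = (\<Sum>K\<le>m. \<Sum>j\<in>{j. j \<in> {..m} \<and> K \<le> j}. f j K)"
    by (rule sum.swap_restrict) auto
  also have "\<dots> = (\<Sum>K\<le>m. \<Sum>j\<in>{K..m}. f j K)"
    by (intro sum.cong) auto
  finally show ?thesis .
qed

lemma lip_taylor_shift:
  assumes "\<And>j. j \<le> m \<Longrightarrow> multilin_sym j (g j y)"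
  shows "(\<Sum>j\<le>m. (1 / fact j) *\<^sub>R g j y (\<lambda>_. (x - y) + t)) =
    (\<Sum>k\<le>m. (1 / fact k) *\<^sub>R g k x (\<lambda>_. t)) - (\<Sum>k\<le>m. (1 / fact k) *\<^sub>R lip_rem m g k x y (\<lambda>_. t))"
proof -
  define G where "G j K = (1 / (fact K * fact (j - K))) *\<^sub>R g j y (\<lambda>l. if l < K then t else x - y)" for j K
  have "(1 / fact j) *\<^sub>R g j y (\<lambda>_. (x - y) + t) = (\<Sum>K\<le>j. G j K)" if "j \<le> m" for j
  proof -
    have "(1 / fact j) *\<^sub>R g j y (\<lambda>_. (x - y) + t) =
        (\<Sum>K\<le>j. ((1 / fact j) * real (j choose K)) *\<^sub>R g j y (\<lambda>l. if l < K then t else x - y))"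
      using multilin_sym_diag_add[OF assms[OF that], of t "x - y"] by (simp add: add.commute scaleR_sum_right)
    also have "\<dots> = (\<Sum>K\<le>j. G j K)"
      unfolding G_def by (intro sum.cong refl arg_cong2[where f = scaleR]) (simp add: binomial_fact field_simps)
    finally show ?thesis .
  qed
  then have "(\<Sum>j\<le>m. (1 / fact j) *\<^sub>R g j y (\<lambda>_. (x - y) + t)) = (\<Sum>j\<le>m. \<Sum>K\<le>j. G j K)"
    by (intro sum.cong) auto
  also have "\<dots> = (\<Sum>k\<le>m. \<Sum>j\<in>{k..m}. G j k)" by (rule sum_triangle_swap)
  also have "\<dots> = (\<Sum>k\<le>m. (1 / fact k) *\<^sub>R (g k x (\<lambda>_. t) - lip_rem m g k x y (\<lambda>_. t)))"
    by (intro sum.cong refl) (simp add: G_def lip_rem_def scaleR_sum_right)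
  finally show ?thesis by (simp only: scaleR_diff_right sum_subtractf)
qed

section \<open>The Faa di Bruno jet of a composite\<close>

definition block_offset :: "(nat \<Rightarrow> nat) \<Rightarrow> nat \<Rightarrow> nat" where
  "block_offset \<iota> l = (\<Sum>l'<l. \<iota> l')"

definition compositions :: "nat \<Rightarrow> nat \<Rightarrow> nat \<Rightarrow> (nat \<Rightarrow> nat) set" where
  "compositions m j k = {\<iota> \<in> {..<j} \<rightarrow>\<^sub>E {1..m}. block_offset \<iota> j = k}"

definition faa_term :: "(nat \<Rightarrow> 'e \<Rightarrow> (nat \<Rightarrow> 'e) \<Rightarrow> 'w) \<Rightarrow> (nat \<Rightarrow> 'd \<Rightarrow> (nat \<Rightarrow> 'd) \<Rightarrow> 'e)
    \<Rightarrow> ('d \<Rightarrow> 'e) \<Rightarrow> nat \<Rightarrow> (nat \<Rightarrow> nat) \<Rightarrow> 'd \<Rightarrow> (nat \<Rightarrow> 'd) \<Rightarrow> 'w" where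
  "faa_term a b F j \<iota> x v = a j (F x) (\<lambda>l. b (\<iota> l) x (\<lambda>i. v (block_offset \<iota> l + i)))"

text \<open>Faa di Bruno's formula for the k-th derivative of f \<circ> F, truncated at order m: a sum over
  ordered decompositions of the k arguments into j consecutive blocks, symmetrized over all
  orderings of the arguments.  The weight 1/(j! \<Prod> \<iota>_l!) compensates for counting each unordered
  set partition j! \<Prod> \<iota>_l! times.\<close>

definition faa_jet :: "nat \<Rightarrow> (nat \<Rightarrow> 'e \<Rightarrow> (nat \<Rightarrow> 'e) \<Rightarrow> 'w::real_vector) \<Rightarrow> (nat \<Rightarrow> 'd \<Rightarrow> (nat \<Rightarrow> 'd) \<Rightarrow> 'e)
    \<Rightarrow> ('d \<Rightarrow> 'e) \<Rightarrow> nat \<Rightarrow> 'd \<Rightarrow> (nat \<Rightarrow> 'd) \<Rightarrow> 'w" where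
  "faa_jet m a b F k x v = (\<Sum>j\<le>m. \<Sum>\<iota>\<in>compositions m j k. (1 / (fact j * (\<Prod>l<j. fact (\<iota> l)))) *\<^sub>R
      (\<Sum>\<sigma>\<in>{\<sigma>. \<sigma> permutes {..<k}}. faa_term a b F j \<iota> x (v \<circ> \<sigma>)))"

lemma block_offset_Suc: "block_offset \<iota> (Suc l) = block_offset \<iota> l + \<iota> l"
  by (simp add: block_offset_def)

lemma block_offset_mono: "l \<le> l' \<Longrightarrow> block_offset \<iota> l \<le> block_offset \<iota> l'"
  unfolding block_offset_def by (rule sum_mono2) auto

lemma block_offset_exists: "p < block_offset \<iota> j \<Longrightarrow> \<exists>l<j. block_offset \<iota> l \<le> p \<and> p < block_offset \<iota> l + \<iota> l"
proof (induction j)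
  case 0
  then show ?case by (simp add: block_offset_def)
next
  case (Suc j)
  show ?case
  proof (cases "p < block_offset \<iota> j")
    case True
    then show ?thesis using Suc.IH by (meson less_SucI)
  next
    case False
    then show ?thesis using Suc.prems by (intro exI[of _ j]) (auto simp: block_offset_Suc)
  qed
qed

lemma block_offset_unique:
  assumes "block_offset \<iota> l \<le> p" "p < block_offset \<iota> l + \<iota> l" "block_offset \<iota> l' \<le> p" "p < block_offset \<iota> l' + \<iota> l'"
  shows "l = l'"
proof (rule ccontr)
  assume "l \<noteq> l'"
  then consider "l < l'" | "l' < l" by linarith
  then show False
  proof cases
    case 1
    then have "block_offset \<iota> (Suc l) \<le> block_offset \<iota> l'" by (intro block_offset_mono) simp
    then show False using assms by (simp add: block_offset_Suc)
  next
    case 2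
    then have "block_offset \<iota> (Suc l') \<le> block_offset \<iota> l" by (intro block_offset_mono) simp
    then show False using assms by (simp add: block_offset_Suc)
  qed
qed

lemma prod_lessThan_add: "(\<Prod>p<(a::nat) + b. g p) = (\<Prod>p<a. g p) * (\<Prod>i<b. g (a + i))"
  by (induction b) (simp_all add: mult_ac)

lemma prod_blocks: "(\<Prod>l<j. \<Prod>i<\<iota> l. g (block_offset \<iota> l + i)) = (\<Prod>p<block_offset \<iota> j. g p)"
  by (induction j) (simp_all add: block_offset_Suc prod_lessThan_add block_offset_def)

lemma compositions_range: "\<iota> \<in> compositions m j k \<Longrightarrow> l < j \<Longrightarrow> \<iota> l \<in> {1..m}"
  using PiE_mem[of \<iota> "{..<j}" "\<lambda>_. {1..m}" l] unfolding compositions_def by blast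

lemma compositions_block_offset: "\<iota> \<in> compositions m j k \<Longrightarrow> block_offset \<iota> j = k"
  unfolding compositions_def by blast

lemma faa_term_update:
  assumes ma: "multilin j (a j (F x))" and mb: "\<And>l. l < j \<Longrightarrow> multilin (\<iota> l) (b (\<iota> l) x)"
    and l: "l < j" "block_offset \<iota> l \<le> p" "p < block_offset \<iota> l + \<iota> l"
  shows "faa_term a b F j \<iota> x (v(p := z)) = a j (F x) ((\<lambda>l'. b (\<iota> l') x (\<lambda>i. v (block_offset \<iota> l' + i)))
    (l := b (\<iota> l) x ((\<lambda>i. v (block_offset \<iota> l + i))(p - block_offset \<iota> l := z))))"
  unfolding faa_term_def
proof (rule multilin_cong[OF ma])
  fix l' assume l': "l' < j"
  show "b (\<iota> l') x (\<lambda>i. (v(p := z)) (block_offset \<iota> l' + i)) = ((\<lambda>l'. b (\<iota> l') x (\<lambda>i. v (block_offset \<iota> l' + i)))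
    (l := b (\<iota> l) x ((\<lambda>i. v (block_offset \<iota> l + i))(p - block_offset \<iota> l := z)))) l'"
  proof (cases "l' = l")
    case True
    have "(\<lambda>i. (v(p := z)) (block_offset \<iota> l + i)) = (\<lambda>i. v (block_offset \<iota> l + i))(p - block_offset \<iota> l := z)"
      using l by (auto simp: fun_eq_iff)
    then show ?thesis using True by simp
  next
    case False
    have "block_offset \<iota> l' + i \<noteq> p" if "i < \<iota> l'" for i
      using block_offset_unique[of \<iota> l' p l] l that False by auto
    then have "b (\<iota> l') x (\<lambda>i. (v(p := z)) (block_offset \<iota> l' + i)) = b (\<iota> l') x (\<lambda>i. v (block_offset \<iota> l' + i))"
      by (intro multilin_cong[OF mb[OF l']]) simp
    then show ?thesis using False by simp
  qed
qed

lemma multilin_faa_term: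
  fixes a :: "nat \<Rightarrow> 'e::real_vector \<Rightarrow> (nat \<Rightarrow> 'e) \<Rightarrow> 'w::real_vector"
    and b :: "nat \<Rightarrow> 'd \<Rightarrow> (nat \<Rightarrow> 'd::real_vector) \<Rightarrow> 'e"
  assumes ma: "multilin j (a j (F x))" and mb: "\<And>l. l < j \<Longrightarrow> multilin (\<iota> l) (b (\<iota> l) x)"
  shows "multilin (block_offset \<iota> j) (faa_term a b F j \<iota> x)"
  unfolding multilin_def
proof (intro conjI allI impI)
  fix v w :: "nat \<Rightarrow> 'd" assume vw: "\<forall>i<block_offset \<iota> j. v i = w i"
  have "v (block_offset \<iota> l + i) = w (block_offset \<iota> l + i)" if "l < j" "i < \<iota> l" for l i
  proof -
    have "block_offset \<iota> (Suc l) \<le> block_offset \<iota> j" using that by (intro block_offset_mono) simp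
    then show ?thesis using vw that by (simp add: block_offset_Suc)
  qed
  then show "faa_term a b F j \<iota> x v = faa_term a b F j \<iota> x w"
    unfolding faa_term_def by (intro multilin_cong[OF ma] multilin_cong[OF mb]) auto
next
  fix p v assume "p < block_offset \<iota> j"
  then obtain l where l: "l < j" "block_offset \<iota> l \<le> p" "p < block_offset \<iota> l + \<iota> l"
    using block_offset_exists by blast
  have "linear (\<lambda>z. b (\<iota> l) x ((\<lambda>i. v (block_offset \<iota> l + i))(p - block_offset \<iota> l := z)))"
    using l by (intro multilin_linear[OF mb[OF l(1)]]) auto
  then have "linear ((\<lambda>z. a j (F x) ((\<lambda>l'. b (\<iota> l') x (\<lambda>i. v (block_offset \<iota> l' + i)))(l := z))) \<circ>
      (\<lambda>z. b (\<iota> l) x ((\<lambda>i. v (block_offset \<iota> l + i))(p - block_offset \<iota> l := z))))"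
    by (rule linear_compose) (rule multilin_linear[OF ma l(1)])
  then show "linear (\<lambda>z. faa_term a b F j \<iota> x (v(p := z)))"
    by (simp only: faa_term_update[of j a F x \<iota> b, OF ma mb l] o_def)
qed

lemma multilin_sym_faa_jet:
  fixes a :: "nat \<Rightarrow> 'e::real_vector \<Rightarrow> (nat \<Rightarrow> 'e) \<Rightarrow> 'w::real_vector"
    and b :: "nat \<Rightarrow> 'd::real_vector \<Rightarrow> (nat \<Rightarrow> 'd) \<Rightarrow> 'e"
  assumes sa: "\<And>j. j \<le> m \<Longrightarrow> multilin_sym j (a j (F x))" and sb: "\<And>i. i \<le> m \<Longrightarrow> multilin_sym i (b i x)"
  shows "multilin_sym k (faa_jet m a b F k x)"
  unfolding multilin_sym_iff
proof (intro conjI allI impI)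
  have e: "faa_jet m a b F k x = (\<lambda>v. \<Sum>j\<le>m. \<Sum>\<iota>\<in>compositions m j k. (1 / (fact j * (\<Prod>l<j. fact (\<iota> l)))) *\<^sub>R
      (\<Sum>\<sigma>\<in>{\<sigma>. \<sigma> permutes {..<k}}. faa_term a b F j \<iota> x (v \<circ> \<sigma>)))"
    by (simp add: faa_jet_def fun_eq_iff)
  have mA: "multilin k (faa_term a b F j \<iota> x)" if j: "j \<le> m" and i: "\<iota> \<in> compositions m j k" for j \<iota>
  proof -
    have "multilin (block_offset \<iota> j) (faa_term a b F j \<iota> x)"
    proof (rule multilin_faa_term)
      show "multilin j (a j (F x))" by (rule multilin_sym_multilin[OF sa[OF j]])
      fix l assume "l < j"
      then have "\<iota> l \<le> m" using compositions_range[OF i] by auto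
      then show "multilin (\<iota> l) (b (\<iota> l) x)" by (rule multilin_sym_multilin[OF sb])
    qed
    then show ?thesis using compositions_block_offset[OF i] by simp
  qed
  show "multilin k (faa_jet m a b F k x)" unfolding e
    by (intro multilin_sum_fun multilin_scaleR_fun multilin_permute_args mA) auto
next
  fix \<pi> v assume p: "\<pi> permutes {..<k}"
  have "(\<Sum>\<sigma>\<in>{\<sigma>. \<sigma> permutes {..<k}}. T (v \<circ> (\<pi> \<circ> \<sigma>))) = (\<Sum>\<sigma>\<in>{\<sigma>. \<sigma> permutes {..<k}}. T (v \<circ> \<sigma>))"
    for T :: "(nat \<Rightarrow> 'd) \<Rightarrow> 'w"
    by (rule setum_permutations_compose_left[OF p, of "\<lambda>\<sigma>. T (v \<circ> \<sigma>)", symmetric])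
  then show "faa_jet m a b F k x (v \<circ> \<pi>) = faa_jet m a b F k x v"
    unfolding faa_jet_def o_assoc by simp
qed

lemma norm_faa_term_le:
  assumes ba: "\<And>u. norm (a j (F x) u) \<le> Ma * (\<Prod>l<j. norm (u l))"
    and bb: "\<And>l u. l < j \<Longrightarrow> norm (b (\<iota> l) x u) \<le> Mb * (\<Prod>i<\<iota> l. norm (u i))"
    and Ma: "Ma \<ge> 0" and Mb: "Mb \<ge> 0"
  shows "norm (faa_term a b F j \<iota> x v) \<le> Ma * Mb^j * (\<Prod>p<block_offset \<iota> j. norm (v p))"
proof -
  have "norm (faa_term a b F j \<iota> x v) \<le> Ma * (\<Prod>l<j. norm (b (\<iota> l) x (\<lambda>i. v (block_offset \<iota> l + i))))"
    unfolding faa_term_def by (rule ba)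
  also have "\<dots> \<le> Ma * (\<Prod>l<j. Mb * (\<Prod>i<\<iota> l. norm (v (block_offset \<iota> l + i))))"
    by (intro mult_left_mono prod_mono Ma) (auto intro: bb)
  also have "\<dots> = Ma * Mb^j * (\<Prod>p<block_offset \<iota> j. norm (v p))"
    by (simp add: prod.distrib prod_blocks[where g="\<lambda>p. norm (v p)"] mult_ac)
  finally show ?thesis .
qed

lemma norm_sum_permutes_faa_term_le:
  assumes ba: "\<And>u. norm (a j (F x) u) \<le> Ma * (\<Prod>l<j. norm (u l))"
    and bb: "\<And>i u. i \<le> m \<Longrightarrow> norm (b i x u) \<le> Mb * (\<Prod>l<i. norm (u l))"
    and Ma: "Ma \<ge> 0" and Mb: "Mb \<ge> 0" and \<iota>: "\<iota> \<in> compositions m j k"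
  shows "norm (\<Sum>\<sigma>\<in>{\<sigma>. \<sigma> permutes {..<k}}. faa_term a b F j \<iota> x (v \<circ> \<sigma>)) \<le> fact k * (Ma * Mb ^ j) * (\<Prod>p<k. norm (v p))"
proof -
  have "norm (faa_term a b F j \<iota> x (v \<circ> \<sigma>)) \<le> Ma * Mb ^ j * (\<Prod>p<k. norm (v p))" if "\<sigma> permutes {..<k}" for \<sigma>
  proof -
    have "norm (faa_term a b F j \<iota> x (v \<circ> \<sigma>)) \<le> Ma * Mb ^ j * (\<Prod>p<block_offset \<iota> j. norm ((v \<circ> \<sigma>) p))"
      using compositions_range[OF \<iota>] by (intro norm_faa_term_le ba bb Ma Mb) auto
    also have "(\<Prod>p<block_offset \<iota> j. norm ((v \<circ> \<sigma>) p)) = (\<Prod>p<k. norm (v p))"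
      using compositions_block_offset[OF \<iota>] prod.permute[OF that, of "\<lambda>p. norm (v p)"] by (simp add: o_def)
    finally show ?thesis .
  qed
  then have "norm (\<Sum>\<sigma>\<in>{\<sigma>. \<sigma> permutes {..<k}}. faa_term a b F j \<iota> x (v \<circ> \<sigma>)) \<le>
      (\<Sum>\<sigma>\<in>{\<sigma>. \<sigma> permutes {..<k}}. Ma * Mb ^ j * (\<Prod>p<k. norm (v p)))"
    by (intro sum_norm_le) auto
  also have "\<dots> = fact k * (Ma * Mb ^ j) * (\<Prod>p<k. norm (v p))"
    using card_permutations[of "{..<k}" k] by simp
  finally show ?thesis .
qed

definition faa_jet_const :: "nat \<Rightarrow> real \<Rightarrow> real \<Rightarrow> nat \<Rightarrow> real" where
  "faa_jet_const m Ma Mb k =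
     (\<Sum>j\<le>m. \<Sum>\<iota>\<in>compositions m j k. (1 / (fact j * (\<Prod>l<j. fact (\<iota> l)))) * (fact k * (Ma * Mb ^ j)))"

lemma norm_faa_jet_le:
  assumes ba: "\<And>j u. j \<le> m \<Longrightarrow> norm (a j (F x) u) \<le> Ma * (\<Prod>l<j. norm (u l))"
    and bb: "\<And>i u. i \<le> m \<Longrightarrow> norm (b i x u) \<le> Mb * (\<Prod>l<i. norm (u l))"
    and Ma: "Ma \<ge> 0" and Mb: "Mb \<ge> 0"
  shows "norm (faa_jet m a b F k x v) \<le> faa_jet_const m Ma Mb k * (\<Prod>p<k. norm (v p))"
proof -
  have "norm ((1 / (fact j * (\<Prod>l<j. fact (\<iota> l)))) *\<^sub>R (\<Sum>\<sigma>\<in>{\<sigma>. \<sigma> permutes {..<k}}. faa_term a b F j \<iota> x (v \<circ> \<sigma>)))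
      \<le> (1 / (fact j * (\<Prod>l<j. fact (\<iota> l)))) * (fact k * (Ma * Mb ^ j) * (\<Prod>p<k. norm (v p)))"
    if "j \<le> m" "\<iota> \<in> compositions m j k" for j \<iota>
  proof -
    have "norm (\<Sum>\<sigma>\<in>{\<sigma>. \<sigma> permutes {..<k}}. faa_term a b F j \<iota> x (v \<circ> \<sigma>)) \<le> fact k * (Ma * Mb ^ j) * (\<Prod>p<k. norm (v p))"
      using that by (intro norm_sum_permutes_faa_term_le[where m = m] ba bb Ma Mb) auto
    moreover have "0 < fact j * (\<Prod>l<j. fact (\<iota> l) :: real)" by (intro mult_pos_pos prod_pos) auto
    ultimately show ?thesis by (simp add: divide_right_mono)
  qed
  then have "norm (faa_jet m a b F k x v) \<le> (\<Sum>j\<le>m. \<Sum>\<iota>\<in>compositions m j k.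
      (1 / (fact j * (\<Prod>l<j. fact (\<iota> l)))) * (fact k * (Ma * Mb ^ j) * (\<Prod>p<k. norm (v p))))"
    unfolding faa_jet_def by (intro order_trans[OF norm_sum sum_mono] order_trans[OF norm_sum sum_mono]) auto
  also have "\<dots> = faa_jet_const m Ma Mb k * (\<Prod>p<k. norm (v p))"
    unfolding faa_jet_const_def sum_distrib_right by (intro sum.cong refl) (simp add: mult_ac)
  finally show ?thesis .
qed

lemma faa_jet_diag:
  assumes ma: "\<And>j. j \<le> m \<Longrightarrow> multilin j (a j (F x))"
  shows "faa_jet m a b F k x (\<lambda>_. t) = fact k *\<^sub>R (\<Sum>j\<le>m. \<Sum>\<iota>\<in>compositions m j k. (1 / fact j) *\<^sub>R
      a j (F x) (\<lambda>l. (1 / fact (\<iota> l)) *\<^sub>R b (\<iota> l) x (\<lambda>_. t)))"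
proof -
  have "faa_jet m a b F k x (\<lambda>_. t) = (\<Sum>j\<le>m. \<Sum>\<iota>\<in>compositions m j k. fact k *\<^sub>R ((1 / fact j) *\<^sub>R
      a j (F x) (\<lambda>l. (1 / fact (\<iota> l)) *\<^sub>R b (\<iota> l) x (\<lambda>_. t))))"
    unfolding faa_jet_def
  proof (intro sum.cong refl)
    fix j \<iota> assume j: "j \<in> {..m}"
    have a: "faa_term a b F j \<iota> x ((\<lambda>_. t) \<circ> \<sigma>) = a j (F x) (\<lambda>l. b (\<iota> l) x (\<lambda>_. t))" for \<sigma>
      by (simp add: faa_term_def o_def)
    have b: "a j (F x) (\<lambda>l. (1 / fact (\<iota> l)) *\<^sub>R b (\<iota> l) x (\<lambda>_. t)) = (\<Prod>l<j. 1 / fact (\<iota> l)) *\<^sub>R a j (F x) (\<lambda>l. b (\<iota> l) x (\<lambda>_. t))"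
      by (rule multilin_scaleR_all[OF ma]) (use j in simp)
    have cp: "card {\<sigma>. \<sigma> permutes {..<k}} = fact k" by (rule card_permutations) simp_all
    show "(1 / (fact j * (\<Prod>l<j. fact (\<iota> l)))) *\<^sub>R (\<Sum>\<sigma>\<in>{\<sigma>. \<sigma> permutes {..<k}}. faa_term a b F j \<iota> x ((\<lambda>_. t) \<circ> \<sigma>)) =
        fact k *\<^sub>R ((1 / fact j) *\<^sub>R a j (F x) (\<lambda>l. (1 / fact (\<iota> l)) *\<^sub>R b (\<iota> l) x (\<lambda>_. t)))"
      unfolding a b by (simp add: cp prod_dividef sum_constant_scaleR field_simps)
  qed
  then show ?thesis by (simp add: scaleR_sum_right)
qed


lemma compositions_0: "compositions m j 0 = (if j = 0 then {\<lambda>_. undefined} else {})"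
proof (cases "j = 0")
  case True
  then show ?thesis unfolding compositions_def by (auto simp: block_offset_def)
next
  case False
  have "\<iota> \<notin> compositions m j 0" for \<iota>
  proof
    assume \<iota>: "\<iota> \<in> compositions m j 0"
    have "\<iota> 0 \<ge> 1" using compositions_range[OF \<iota>, of 0] False by auto
    moreover have "\<iota> 0 \<le> block_offset \<iota> j" unfolding block_offset_def using False by (intro member_le_sum) auto
    ultimately show False using compositions_block_offset[OF \<iota>] by simp
  qed
  then show ?thesis using False by auto
qed

lemma faa_jet_0:
  assumes "multilin 0 (a 0 (F x))"
  shows "faa_jet m a b F 0 x v = a 0 (F x) (\<lambda>_. 0)"
proof -
  have "{\<sigma>. \<sigma> permutes {..<(0::nat)}} = {id}" by (auto simp: permutes_empty)
  then have "faa_jet m a b F 0 x v = (\<Sum>j\<le>m. if j = 0 then faa_term a b F 0 (\<lambda>_. undefined) x v else 0)"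
    unfolding faa_jet_def compositions_0 by (intro sum.cong refl) auto
  also have "\<dots> = faa_term a b F 0 (\<lambda>_. undefined) x v" by (simp add: sum.delta)
  also have "\<dots> = a 0 (F x) (\<lambda>_. 0)"
    unfolding faa_term_def by (rule multilin_cong[OF assms]) simp
  finally show ?thesis .
qed

section \<open>Composition of Lip-gamma maps\<close>

lemma norm_inverse_fact_scaleR_le: "norm y \<le> B \<Longrightarrow> norm ((1 / fact j) *\<^sub>R y) \<le> B"
proof -
  assume "norm y \<le> B"
  moreover have "1 / (fact j :: real) \<le> 1" using fact_ge_1[of j, where 'a = real] by simp
  ultimately show ?thesis using mult_right_mono[of "1 / fact j" 1 "norm y"] by simp
qed

lemma powr_le_two_powr_mult:
  fixes r :: real
  assumes "1/2 \<le> r" "0 \<le> e1" "e1 \<le> e2" "e2 \<le> g"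
  shows "r powr e1 \<le> 2 powr g * r powr e2"
proof (cases "r \<ge> 1")
  case True
  have "r powr e1 \<le> r powr e2" using True assms by (intro powr_mono) auto
  also have "\<dots> \<le> 2 powr g * r powr e2"
    using mult_right_mono[of 1 "2 powr g" "r powr e2"] assms by (simp add: ge_one_powr_ge_zero)
  finally show ?thesis .
next
  case False
  have "r powr e1 \<le> 1" using False assms by (intro powr_le1) auto
  also have "1 \<le> 2 powr (g - e2)" using assms by (intro ge_one_powr_ge_zero) auto
  also have "2 powr (g - e2) = 2 powr g * (1/2) powr e2"
    by (simp add: powr_diff powr_divide divide_simps)
  also have "\<dots> \<le> 2 powr g * r powr e2"
    using assms by (intro mult_left_mono powr_mono2) auto
  finally show ?thesis .
qed

locale lip_composition =
  fixes \<gamma> :: real and a :: "nat \<Rightarrow> 'e::real_normed_vector \<Rightarrow> (nat \<Rightarrow> 'e) \<Rightarrow> 'w::real_normed_vector"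
    and b :: "nat \<Rightarrow> 'd::real_normed_vector \<Rightarrow> (nat \<Rightarrow> 'd) \<Rightarrow> 'e" and F :: "'d \<Rightarrow> 'e"
    and U :: "'d set" and V :: "'e set" and Ma Mb :: real
  assumes gamma_ge_1: "\<gamma> \<ge> 1" and lip_a: "lip_coll \<gamma> Ma V a" and lip_b: "lip_coll \<gamma> Mb U b"
    and b_0: "\<And>z v. z \<in> U \<Longrightarrow> b 0 z v = F z" and F_into: "\<And>z. z \<in> U \<Longrightarrow> F z \<in> V"
    and Ma_nonneg: "Ma \<ge> 0" and Mb_nonneg: "Mb \<ge> 0"
begin

abbreviation "m \<equiv> lip_deg \<gamma>"

lemma m_less_gamma: "real m < \<gamma>" and gamma_le_Suc_m: "\<gamma> \<le> real m + 1"
  using lip_deg_bounds[OF gamma_ge_1] by auto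

lemma a_sym: "u \<in> V \<Longrightarrow> j \<le> m \<Longrightarrow> multilin_sym j (a j u)"
  and a_bound: "u \<in> V \<Longrightarrow> j \<le> m \<Longrightarrow> norm (a j u v) \<le> Ma * (\<Prod>i<j. norm (v i))"
  and a_rem: "u \<in> V \<Longrightarrow> u' \<in> V \<Longrightarrow> k \<le> m \<Longrightarrow>
    norm (lip_rem m a k u u' v) \<le> Ma * norm (u - u') powr (\<gamma> - real k) * (\<Prod>i<k. norm (v i))"
  using lip_a unfolding lip_coll_def by blast+

lemma b_sym: "z \<in> U \<Longrightarrow> j \<le> m \<Longrightarrow> multilin_sym j (b j z)"
  and b_bound: "z \<in> U \<Longrightarrow> j \<le> m \<Longrightarrow> norm (b j z v) \<le> Mb * (\<Prod>i<j. norm (v i))"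
  and b_rem: "z \<in> U \<Longrightarrow> z' \<in> U \<Longrightarrow> k \<le> m \<Longrightarrow>
    norm (lip_rem m b k z z' v) \<le> Mb * norm (z - z') powr (\<gamma> - real k) * (\<Prod>i<k. norm (v i))"
  using lip_b unfolding lip_coll_def by blast+

definition jet :: "nat \<Rightarrow> 'd \<Rightarrow> (nat \<Rightarrow> 'd) \<Rightarrow> 'w" where
  "jet k x = faa_jet m a b F k x"

lemma jet_sym: "x \<in> U \<Longrightarrow> multilin_sym k (jet k x)"
  unfolding jet_def by (rule multilin_sym_faa_jet) (auto intro: a_sym b_sym F_into)

lemma jet_bound: "x \<in> U \<Longrightarrow> norm (jet k x v) \<le> faa_jet_const m Ma Mb k * (\<Prod>p<k. norm (v p))"
  unfolding jet_def by (rule norm_faa_jet_le[OF a_bound b_bound Ma_nonneg Mb_nonneg]) (auto intro: F_into)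

lemma jet_0: "x \<in> U \<Longrightarrow> jet 0 x v = a 0 (F x) (\<lambda>_. 0)"
  unfolding jet_def by (intro faa_jet_0 multilin_sym_multilin a_sym F_into) auto

definition taylor_a :: "'e \<Rightarrow> 'e \<Rightarrow> 'w" where
  "taylor_a u z = (\<Sum>j\<le>m. (1 / fact j) *\<^sub>R a j u (\<lambda>_. z))"

definition taylor_b :: "'d \<Rightarrow> 'd \<Rightarrow> 'e" where
  "taylor_b x t = (\<Sum>i\<le>m. (1 / fact i) *\<^sub>R b i x (\<lambda>_. t))"

definition taylor_jet :: "'d \<Rightarrow> 'd \<Rightarrow> 'w" where
  "taylor_jet x t = (\<Sum>k\<le>m. (1 / fact k) *\<^sub>R jet k x (\<lambda>_. t))"

lemma taylor_a_shift: "u \<in> V \<Longrightarrow> u' \<in> V \<Longrightarrow>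
    taylor_a u' ((u - u') + z) = taylor_a u z - (\<Sum>k\<le>m. (1 / fact k) *\<^sub>R lip_rem m a k u u' (\<lambda>_. z))"
  unfolding taylor_a_def by (rule lip_taylor_shift) (rule a_sym)

lemma taylor_b_shift: "x \<in> U \<Longrightarrow> y \<in> U \<Longrightarrow>
    taylor_b y ((x - y) + t) = taylor_b x t - (\<Sum>k\<le>m. (1 / fact k) *\<^sub>R lip_rem m b k x y (\<lambda>_. t))"
  unfolding taylor_b_def by (rule lip_taylor_shift) (rule b_sym)

lemma taylor_jet_shift: "x \<in> U \<Longrightarrow> y \<in> U \<Longrightarrow>
    taylor_jet y ((x - y) + t) = taylor_jet x t - (\<Sum>k\<le>m. (1 / fact k) *\<^sub>R lip_rem m jet k x y (\<lambda>_. t))"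
  unfolding taylor_jet_def by (rule lip_taylor_shift) (rule jet_sym)

lemma taylor_b_minus_F: "x \<in> U \<Longrightarrow> taylor_b x t - F x = (\<Sum>i\<in>{1..m}. (1 / fact i) *\<^sub>R b i x (\<lambda>_. t))"
  unfolding taylor_b_def atMost_atLeast0 sum.atLeast_Suc_atMost[OF le0] by (simp add: b_0)

definition expanded_term :: "nat \<Rightarrow> (nat \<Rightarrow> nat) \<Rightarrow> 'd \<Rightarrow> 'd \<Rightarrow> 'w" where
  "expanded_term j \<iota> x t = a j (F x) (\<lambda>l. (1 / fact (\<iota> l)) *\<^sub>R b (\<iota> l) x (\<lambda>_. t))"

lemma taylor_a_taylor_b_expand:
  assumes "x \<in> U"
  shows "taylor_a (F x) (taylor_b x t - F x) =
    (\<Sum>j\<le>m. (1 / fact j) *\<^sub>R (\<Sum>\<iota>\<in>{..<j} \<rightarrow>\<^sub>E {1..m}. expanded_term j \<iota> x t))"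
  unfolding taylor_a_def
proof (intro sum.cong refl arg_cong[where f = "scaleR _"])
  fix j assume "j \<in> {..m}"
  then have ml: "multilin j (a j (F x))" by (intro multilin_sym_multilin a_sym F_into assms) simp
  have "a j (F x) (\<lambda>_. taylor_b x t - F x) =
      a j (F x) (\<lambda>l. if l < j then (\<Sum>i\<in>{1..m}. (1 / fact i) *\<^sub>R b i x (\<lambda>_. t)) else 0)"
    unfolding taylor_b_minus_F[OF assms] by (rule multilin_cong[OF ml]) simp
  also have "\<dots> = (\<Sum>\<iota>\<in>{..<j} \<rightarrow>\<^sub>E {1..m}. a j (F x) (\<lambda>l. if l < j then (1 / fact (\<iota> l)) *\<^sub>R b (\<iota> l) x (\<lambda>_. t) else 0))"
    by (rule multilin_expand_sums[OF ml order_refl])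
  also have "\<dots> = (\<Sum>\<iota>\<in>{..<j} \<rightarrow>\<^sub>E {1..m}. expanded_term j \<iota> x t)"
    unfolding expanded_term_def by (intro sum.cong refl multilin_cong[OF ml]) simp
  finally show "a j (F x) (\<lambda>_. taylor_b x t - F x) = \<dots>" .
qed

lemma taylor_jet_expand:
  assumes "x \<in> U"
  shows "taylor_jet x t =
    (\<Sum>j\<le>m. (1 / fact j) *\<^sub>R (\<Sum>\<iota>\<in>{\<iota>\<in>{..<j} \<rightarrow>\<^sub>E {1..m}. block_offset \<iota> j \<le> m}. expanded_term j \<iota> x t))"
proof -
  have "taylor_jet x t = (\<Sum>k\<le>m. \<Sum>j\<le>m. \<Sum>\<iota>\<in>compositions m j k. (1 / fact j) *\<^sub>R expanded_term j \<iota> x t)"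
    unfolding taylor_jet_def jet_def expanded_term_def
    by (intro sum.cong refl, subst faa_jet_diag) (auto intro: multilin_sym_multilin a_sym F_into assms)
  also have "\<dots> = (\<Sum>j\<le>m. (1 / fact j) *\<^sub>R (\<Sum>k\<le>m. \<Sum>\<iota>\<in>compositions m j k. expanded_term j \<iota> x t))"
    by (subst sum.swap) (simp add: scaleR_sum_right)
  also have "\<dots> = (\<Sum>j\<le>m. (1 / fact j) *\<^sub>R (\<Sum>\<iota>\<in>{\<iota>\<in>{..<j} \<rightarrow>\<^sub>E {1..m}. block_offset \<iota> j \<le> m}. expanded_term j \<iota> x t))"
  proof (intro sum.cong refl arg_cong[where f = "scaleR _"])
    fix j
    let ?P = "{\<iota>\<in>{..<j} \<rightarrow>\<^sub>E {1..m}. block_offset \<iota> j \<le> m}"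
    have "finite ?P" by (rule finite_subset[of _ "{..<j} \<rightarrow>\<^sub>E {1..m}"]) (auto intro: finite_PiE)
    then have "(\<Sum>k\<le>m. \<Sum>\<iota>\<in>{\<iota>\<in>?P. block_offset \<iota> j = k}. expanded_term j \<iota> x t) = (\<Sum>\<iota>\<in>?P. expanded_term j \<iota> x t)"
      by (intro sum.group) auto
    moreover have "{\<iota>\<in>?P. block_offset \<iota> j = k} = compositions m j k" if "k \<in> {..m}" for k
      using that unfolding compositions_def by blast
    ultimately show "(\<Sum>k\<le>m. \<Sum>\<iota>\<in>compositions m j k. expanded_term j \<iota> x t) = (\<Sum>\<iota>\<in>?P. expanded_term j \<iota> x t)"
      by simp
  qed
  finally show ?thesis .
qed

lemma norm_expanded_term_le:
  assumes "x \<in> U" "norm t \<le> 1" "j \<le> m" "\<iota> \<in> {..<j} \<rightarrow>\<^sub>E {1..m}"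
  shows "norm (expanded_term j \<iota> x t) \<le> Ma * Mb ^ j * norm t ^ block_offset \<iota> j"
proof -
  have "norm ((1 / fact i) *\<^sub>R b i x (\<lambda>_. t)) \<le> Mb * norm t ^ i" if "i \<le> m" for i
    using norm_inverse_fact_scaleR_le[OF b_bound[OF assms(1) that, of "\<lambda>_. t"]] by simp
  then have "norm ((1 / fact (\<iota> l)) *\<^sub>R b (\<iota> l) x (\<lambda>_. t)) \<le> Mb * norm t ^ \<iota> l" if "l < j" for l
    using assms(4) that by (auto simp: PiE_iff)
  then have "norm (expanded_term j \<iota> x t) \<le> Ma * (\<Prod>l<j. Mb * norm t ^ \<iota> l)"
    unfolding expanded_term_def
    by (intro order_trans[OF a_bound[OF F_into[OF assms(1)] assms(3)]] mult_left_mono[OF _ Ma_nonneg] prod_mono) auto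
  also have "\<dots> = Ma * Mb ^ j * norm t ^ block_offset \<iota> j"
    by (simp add: prod.distrib power_sum block_offset_def)
  finally show ?thesis .
qed

definition C_tail :: real where
  "C_tail = (\<Sum>j\<le>m. real (card ({..<j} \<rightarrow>\<^sub>E {1..m})) * (Ma * Mb ^ j))"

lemma C_tail_nonneg: "C_tail \<ge> 0"
  unfolding C_tail_def using Ma_nonneg Mb_nonneg by (intro sum_nonneg) auto

text \<open>Substituting the Taylor polynomial of F into that of f reproduces the Taylor polynomial of
  the jet, except for the terms of total degree above m.\<close>

lemma taylor_composition_error:
  assumes x: "x \<in> U" and t: "norm t \<le> 1"
  shows "norm (taylor_a (F x) (taylor_b x t - F x) - taylor_jet x t) \<le> C_tail * norm t ^ Suc m"
proof -
  define P where "P j = {..<j} \<rightarrow>\<^sub>E {1..m}" for j :: nat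
  define H where "H j = {\<iota>\<in>P j. \<not> block_offset \<iota> j \<le> m}" for j
  have "finite (P j)" for j unfolding P_def by (intro finite_PiE) auto
  then have "(\<Sum>\<iota>\<in>P j. expanded_term j \<iota> x t) - (\<Sum>\<iota>\<in>{\<iota>\<in>P j. block_offset \<iota> j \<le> m}. expanded_term j \<iota> x t) =
      (\<Sum>\<iota>\<in>H j. expanded_term j \<iota> x t)" for j
    unfolding H_def by (subst sum_diff[symmetric]) (auto intro: sum.cong)
  then have diff: "taylor_a (F x) (taylor_b x t - F x) - taylor_jet x t =
      (\<Sum>j\<le>m. (1 / fact j) *\<^sub>R (\<Sum>\<iota>\<in>H j. expanded_term j \<iota> x t))"
    unfolding taylor_a_taylor_b_expand[OF x] taylor_jet_expand[OF x] P_def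
    by (simp add: sum_subtractf[symmetric] scaleR_diff_right[symmetric])
  have "norm (\<Sum>\<iota>\<in>H j. expanded_term j \<iota> x t) \<le> real (card (P j)) * (Ma * Mb ^ j) * norm t ^ Suc m"
    if j: "j \<le> m" for j
  proof -
    have "norm (expanded_term j \<iota> x t) \<le> Ma * Mb ^ j * norm t ^ Suc m" if "\<iota> \<in> H j" for \<iota>
    proof -
      have "norm (expanded_term j \<iota> x t) \<le> Ma * Mb ^ j * norm t ^ block_offset \<iota> j"
        using that by (intro norm_expanded_term_le[OF x t j]) (simp add: H_def P_def)
      also have "\<dots> \<le> Ma * Mb ^ j * norm t ^ Suc m"
        using that t Ma_nonneg Mb_nonneg by (intro mult_left_mono power_decreasing) (auto simp: H_def)
      finally show ?thesis .
    qed
    then have "norm (\<Sum>\<iota>\<in>H j. expanded_term j \<iota> x t) \<le> (\<Sum>\<iota>\<in>H j. Ma * Mb ^ j * norm t ^ Suc m)"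
      by (rule sum_norm_le)
    also have "\<dots> = real (card (H j)) * (Ma * Mb ^ j * norm t ^ Suc m)" by simp
    also have "\<dots> \<le> real (card (P j)) * (Ma * Mb ^ j * norm t ^ Suc m)"
      using Ma_nonneg Mb_nonneg \<open>finite (P j)\<close> by (intro mult_right_mono) (auto intro!: card_mono simp: H_def)
    finally show ?thesis by (simp add: mult_ac)
  qed
  then have "norm (taylor_a (F x) (taylor_b x t - F x) - taylor_jet x t) \<le>
      (\<Sum>j\<le>m. real (card (P j)) * (Ma * Mb ^ j) * norm t ^ Suc m)"
    unfolding diff
    by (intro order_trans[OF norm_sum sum_mono] norm_inverse_fact_scaleR_le) auto
  also have "\<dots> = C_tail * norm t ^ Suc m" unfolding C_tail_def P_def by (simp add: sum_distrib_right)
  finally show ?thesis .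
qed

text \<open>The summand 1 only serves to make C_lip positive.\<close>

definition C_lip :: real where
  "C_lip = real (Suc m) * Mb + 1"

lemma C_lip_pos: "C_lip > 0"
  unfolding C_lip_def using Mb_nonneg by (simp add: add_nonneg_pos)

lemma taylor_b_minus_F_le:
  assumes "x \<in> U" "norm t \<le> 1"
  shows "norm (taylor_b x t - F x) \<le> real m * Mb * norm t"
proof -
  have "norm ((1 / fact i) *\<^sub>R b i x (\<lambda>_. t)) \<le> Mb * norm t" if "i \<in> {1..m}" for i
  proof -
    have "norm ((1 / fact i) *\<^sub>R b i x (\<lambda>_. t)) \<le> Mb * norm t ^ i"
      using that norm_inverse_fact_scaleR_le[OF b_bound[OF assms(1), of i "\<lambda>_. t"]] by simp
    also have "\<dots> \<le> Mb * norm t"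
      using that assms(2) power_decreasing[of 1 i "norm t"] by (intro mult_left_mono[OF _ Mb_nonneg]) auto
    finally show ?thesis .
  qed
  then have "norm (taylor_b x t - F x) \<le> (\<Sum>i\<in>{1..m}. Mb * norm t)"
    unfolding taylor_b_minus_F[OF assms(1)] by (intro order_trans[OF norm_sum sum_mono])
  then show ?thesis by simp
qed

lemma F_lipschitz_le:
  assumes x: "x \<in> U" and y: "y \<in> U" and "norm (x - y) \<le> 1"
  shows "norm (F x - F y) \<le> C_lip * norm (x - y)"
proof -
  have "lip_rem m b 0 x y (\<lambda>_. 0) = F x - taylor_b y (x - y)"
    unfolding lip_rem_def taylor_b_def using b_0[OF x] by (simp add: atLeast0AtMost)
  then have split: "F x - F y = lip_rem m b 0 x y (\<lambda>_. 0) + (taylor_b y (x - y) - F y)" by simp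
  have "norm (lip_rem m b 0 x y (\<lambda>_. 0)) \<le> Mb * norm (x - y) powr \<gamma>"
    using b_rem[OF x y, of 0 "\<lambda>_. 0"] by simp
  also have "\<dots> \<le> Mb * norm (x - y)"
    using powr_mono'[OF gamma_ge_1 _ assms(3)] by (intro mult_left_mono[OF _ Mb_nonneg]) auto
  finally have "norm (F x - F y) \<le> Mb * norm (x - y) + real m * Mb * norm (x - y)"
    using split norm_triangle_ineq taylor_b_minus_F_le[OF y assms(3)] by (smt (verit))
  also have "\<dots> \<le> C_lip * norm (x - y)" unfolding C_lip_def by (simp add: algebra_simps)
  finally show ?thesis .
qed

lemma norm_taylor_b_rem_sum_le:
  assumes x: "x \<in> U" and y: "y \<in> U" and "0 < norm (x - y)" and t: "norm t \<le> norm (x - y)"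
  shows "norm (\<Sum>k\<le>m. (1 / fact k) *\<^sub>R lip_rem m b k x y (\<lambda>_. t)) \<le> real (Suc m) * Mb * norm (x - y) powr \<gamma>"
proof -
  have "norm ((1 / fact k) *\<^sub>R lip_rem m b k x y (\<lambda>_. t)) \<le> Mb * norm (x - y) powr \<gamma>" if "k \<le> m" for k
  proof -
    have "norm ((1 / fact k) *\<^sub>R lip_rem m b k x y (\<lambda>_. t)) \<le> Mb * norm (x - y) powr (\<gamma> - real k) * norm t ^ k"
      using norm_inverse_fact_scaleR_le[OF b_rem[OF x y that, of "\<lambda>_. t"]] by simp
    also have "\<dots> \<le> Mb * norm (x - y) powr (\<gamma> - real k) * norm (x - y) ^ k"
      using t Mb_nonneg by (intro mult_left_mono power_mono) auto
    also have "\<dots> = Mb * norm (x - y) powr \<gamma>"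
      using \<open>0 < norm (x - y)\<close> by (simp add: powr_realpow[symmetric] powr_add[symmetric] mult.assoc)
    finally show ?thesis .
  qed
  then have "norm (\<Sum>k\<le>m. (1 / fact k) *\<^sub>R lip_rem m b k x y (\<lambda>_. t)) \<le> (\<Sum>k\<le>m. Mb * norm (x - y) powr \<gamma>)"
    by (intro order_trans[OF norm_sum sum_mono]) auto
  then show ?thesis by simp
qed

lemma taylor_a_shift_le:
  assumes u: "u \<in> V" and u': "u' \<in> V" and "0 < r" "norm (u - u') \<le> r" "norm z \<le> r"
  shows "norm (taylor_a u z - taylor_a u' ((u - u') + z)) \<le> real (Suc m) * Ma * r powr \<gamma>"
proof -
  have "norm ((1 / fact k) *\<^sub>R lip_rem m a k u u' (\<lambda>_. z)) \<le> Ma * r powr \<gamma>" if "k \<le> m" for k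
  proof -
    have "norm ((1 / fact k) *\<^sub>R lip_rem m a k u u' (\<lambda>_. z)) \<le> Ma * norm (u - u') powr (\<gamma> - real k) * norm z ^ k"
      using norm_inverse_fact_scaleR_le[OF a_rem[OF u u' that, of "\<lambda>_. z"]] by simp
    also have "\<dots> \<le> Ma * r powr (\<gamma> - real k) * r ^ k"
      using assms(4,5) m_less_gamma that Ma_nonneg by (intro mult_mono mult_left_mono powr_mono2 power_mono) auto
    also have "\<dots> = Ma * r powr \<gamma>"
      using \<open>0 < r\<close> by (simp add: powr_realpow[symmetric] powr_add[symmetric] mult.assoc)
    finally show ?thesis .
  qed
  then have "norm (\<Sum>k\<le>m. (1 / fact k) *\<^sub>R lip_rem m a k u u' (\<lambda>_. z)) \<le> (\<Sum>k\<le>m. Ma * r powr \<gamma>)"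
    by (intro order_trans[OF norm_sum sum_mono]) auto
  then show ?thesis unfolding taylor_a_shift[OF u u'] by simp
qed

lemma taylor_a_lipschitz:
  assumes u: "u \<in> V" and "norm z \<le> R" "norm z' \<le> R"
  shows "norm (taylor_a u z - taylor_a u z') \<le> (\<Sum>j\<le>m. real j * (Ma * R ^ (j - 1))) * norm (z - z')"
proof -
  have "norm ((1 / fact j) *\<^sub>R (a j u (\<lambda>_. z) - a j u (\<lambda>_. z'))) \<le> real j * (Ma * R ^ (j - 1) * norm (z - z'))"
    if "j \<le> m" for j
    by (intro norm_inverse_fact_scaleR_le multilin_diag_lipschitz[OF multilin_sym_multilin[OF a_sym[OF u that]]
          a_bound[OF u that] Ma_nonneg assms(2,3)])
  then have "norm (\<Sum>j\<le>m. (1 / fact j) *\<^sub>R (a j u (\<lambda>_. z) - a j u (\<lambda>_. z'))) \<le>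
      (\<Sum>j\<le>m. real j * (Ma * R ^ (j - 1) * norm (z - z')))"
    by (intro order_trans[OF norm_sum sum_mono]) auto
  then show ?thesis
    unfolding taylor_a_def sum_distrib_right by (simp add: scaleR_diff_right sum_subtractf mult_ac)
qed

lemma power_Suc_m_le_powr_gamma: "0 \<le> r \<Longrightarrow> r \<le> 1 \<Longrightarrow> r ^ Suc m \<le> r powr \<gamma>"
proof (cases "r = 0")
  case False
  assume "0 \<le> r" "r \<le> 1"
  then have "r ^ Suc m = r powr real (Suc m)" using False by (intro powr_realpow[symmetric]) auto
  also have "\<dots> \<le> r powr \<gamma>" using gamma_le_Suc_m \<open>0 \<le> r\<close> \<open>r \<le> 1\<close> by (intro powr_mono') auto
  finally show ?thesis .
qed simp

lemma taylor_composition_error_le: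
  assumes "x \<in> U" "0 \<le> r" "r \<le> 1/2" "norm t \<le> 2 * r"
  shows "norm (taylor_a (F x) (taylor_b x t - F x) - taylor_jet x t) \<le> C_tail * 2 ^ Suc m * r powr \<gamma>"
proof -
  have "norm (taylor_a (F x) (taylor_b x t - F x) - taylor_jet x t) \<le> C_tail * norm t ^ Suc m"
    using assms by (intro taylor_composition_error) auto
  also have "\<dots> \<le> C_tail * (2 * r) ^ Suc m"
    using assms by (intro mult_left_mono[OF power_mono C_tail_nonneg]) auto
  also have "\<dots> \<le> C_tail * 2 ^ Suc m * r powr \<gamma>"
    using assms C_tail_nonneg power_Suc_m_le_powr_gamma[of r]
    by (simp add: power_mult_distrib mult.assoc mult_left_mono)
  finally show ?thesis .
qed

definition R_taylor :: real where
  "R_taylor = 2 * C_lip + real (Suc m) * Mb"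

definition C_shift :: real where
  "C_shift = real (Suc m) * Ma * C_lip powr \<gamma> + (\<Sum>j\<le>m. real j * (Ma * R_taylor ^ (j - 1))) * (real (Suc m) * Mb)"

definition C_diag :: real where
  "C_diag = 2 * C_tail * 2 ^ Suc m + C_shift"

lemma R_taylor_nonneg: "R_taylor \<ge> 0"
  unfolding R_taylor_def using C_lip_pos Mb_nonneg by simp

lemma C_diag_nonneg: "C_diag \<ge> 0"
  unfolding C_diag_def C_shift_def using C_tail_nonneg Ma_nonneg Mb_nonneg R_taylor_nonneg
  by (intro add_nonneg_nonneg mult_nonneg_nonneg sum_nonneg) auto

lemma taylor_a_perturb_le:
  assumes "u \<in> V" "norm z \<le> 2 * C_lip" "norm e \<le> real (Suc m) * Mb * s" "0 \<le> s" "s \<le> 1"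
  shows "norm (taylor_a u z - taylor_a u (z - e)) \<le>
    (\<Sum>j\<le>m. real j * (Ma * R_taylor ^ (j - 1))) * (real (Suc m) * Mb * s)"
proof -
  have "real (Suc m) * Mb * s \<le> real (Suc m) * Mb" using assms(4,5) Mb_nonneg by (simp add: mult_left_le)
  then have "norm e \<le> real (Suc m) * Mb" using assms(3) by linarith
  then have "norm z \<le> R_taylor" and "norm (z - e) \<le> R_taylor"
    using assms(2) norm_triangle_ineq4[of z e] Mb_nonneg unfolding R_taylor_def
    by (simp_all add: add_increasing2)
  then have "norm (taylor_a u z - taylor_a u (z - e)) \<le> (\<Sum>j\<le>m. real j * (Ma * R_taylor ^ (j - 1))) * norm e"
    using taylor_a_lipschitz[OF assms(1)] by fastforce
  also have "\<dots> \<le> (\<Sum>j\<le>m. real j * (Ma * R_taylor ^ (j - 1))) * (real (Suc m) * Mb * s)"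
    using assms(3) Ma_nonneg R_taylor_nonneg by (intro mult_left_mono sum_nonneg) auto
  finally show ?thesis .
qed

text \<open>Re-expanding the Taylor polynomials of F and of f from y to x costs only their remainders.\<close>

lemma taylor_a_taylor_b_shift_le:
  assumes x: "x \<in> U" and y: "y \<in> U" and "0 < norm (x - y)" "norm (x - y) \<le> 1/2"
    and t: "norm t \<le> norm (x - y)"
  shows "norm (taylor_a (F x) (taylor_b x t - F x) - taylor_a (F y) (taylor_b y ((x - y) + t) - F y))
    \<le> C_shift * norm (x - y) powr \<gamma>"
proof -
  define r where "r = norm (x - y)"
  have r: "0 < r" "r \<le> 1/2" "norm t \<le> r" "norm t \<le> 1" using assms by (auto simp: r_def)
  define Q where "Q = taylor_b x t - F x"
  define \<delta> where "\<delta> = F x - F y"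
  define E where "E = (\<Sum>k\<le>m. (1 / fact k) *\<^sub>R lip_rem m b k x y (\<lambda>_. t))"
  have Fx: "F x \<in> V" and Fy: "F y \<in> V" using F_into x y by auto
  have "norm Q \<le> real m * Mb * r"
    using taylor_b_minus_F_le[OF x r(4)] mult_left_mono[OF r(3), of "real m * Mb"] Mb_nonneg
    unfolding Q_def by simp
  also have "\<dots> \<le> C_lip * r"
    unfolding C_lip_def using r(1) Mb_nonneg by (intro mult_right_mono) (auto simp: algebra_simps)
  finally have Q_le: "norm Q \<le> C_lip * r" .
  have \<delta>_le: "norm \<delta> \<le> C_lip * r" using F_lipschitz_le[OF x y] r unfolding \<delta>_def r_def by simp
  have "C_lip * r \<le> C_lip" using C_lip_pos r by (simp add: mult_left_le)
  then have "norm (\<delta> + Q) \<le> 2 * C_lip" using norm_triangle_ineq[of \<delta> Q] \<delta>_le Q_le by linarith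
  have "taylor_b y ((x - y) + t) - F y = \<delta> + Q - E"
    unfolding Q_def \<delta>_def E_def taylor_b_shift[OF x y] by simp
  then have split: "taylor_a (F x) (taylor_b x t - F x) - taylor_a (F y) (taylor_b y ((x - y) + t) - F y) =
      (taylor_a (F x) Q - taylor_a (F y) (\<delta> + Q)) + (taylor_a (F y) (\<delta> + Q) - taylor_a (F y) (\<delta> + Q - E))"
    unfolding Q_def by simp
  moreover have "norm (taylor_a (F x) Q - taylor_a (F y) (\<delta> + Q)) \<le> real (Suc m) * Ma * C_lip powr \<gamma> * r powr \<gamma>"
    using taylor_a_shift_le[OF Fx Fy _ \<delta>_le[unfolded \<delta>_def] Q_le] C_lip_pos r
    by (simp add: \<delta>_def powr_mult mult.assoc)
  moreover have "norm (taylor_a (F y) (\<delta> + Q) - taylor_a (F y) (\<delta> + Q - E)) \<le>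
      (\<Sum>j\<le>m. real j * (Ma * R_taylor ^ (j - 1))) * (real (Suc m) * Mb * r powr \<gamma>)"
  proof (rule taylor_a_perturb_le[OF Fy \<open>norm (\<delta> + Q) \<le> 2 * C_lip\<close>])
    show "norm E \<le> real (Suc m) * Mb * r powr \<gamma>"
      unfolding E_def r_def by (rule norm_taylor_b_rem_sum_le[OF x y assms(3) t])
    show "0 \<le> r powr \<gamma>" "r powr \<gamma> \<le> 1" using r gamma_ge_1 by (auto intro: powr_le1)
  qed
  ultimately have "norm (taylor_a (F x) (taylor_b x t - F x) - taylor_a (F y) (taylor_b y ((x - y) + t) - F y)) \<le>
      real (Suc m) * Ma * C_lip powr \<gamma> * r powr \<gamma> +
      (\<Sum>j\<le>m. real j * (Ma * R_taylor ^ (j - 1))) * (real (Suc m) * Mb * r powr \<gamma>)"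
    unfolding split by (intro order_trans[OF norm_triangle_ineq] add_mono)
  then show ?thesis unfolding r_def C_shift_def by (simp add: algebra_simps)
qed

lemma taylor_jet_shift_le:
  assumes x: "x \<in> U" and y: "y \<in> U" and "0 < norm (x - y)" "norm (x - y) \<le> 1/2"
    and t: "norm t \<le> norm (x - y)"
  shows "norm (taylor_jet x t - taylor_jet y ((x - y) + t)) \<le> C_diag * norm (x - y) powr \<gamma>"
proof -
  define r where "r = norm (x - y)"
  have "norm ((x - y) + t) \<le> 2 * r" using norm_triangle_ineq[of "x - y" t] t by (simp add: r_def)
  have "norm (taylor_jet x t - taylor_a (F x) (taylor_b x t - F x)) \<le> C_tail * 2 ^ Suc m * r powr \<gamma>"
    using taylor_composition_error_le[OF x, of r t] assms by (simp add: r_def norm_minus_commute)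
  moreover have "norm (taylor_a (F y) (taylor_b y ((x - y) + t) - F y) - taylor_jet y ((x - y) + t)) \<le>
      C_tail * 2 ^ Suc m * r powr \<gamma>"
    using taylor_composition_error_le[OF y] assms \<open>norm ((x - y) + t) \<le> 2 * r\<close> by (simp add: r_def)
  moreover note taylor_a_taylor_b_shift_le[OF assms]
  moreover have "taylor_jet x t - taylor_jet y ((x - y) + t) =
      (taylor_jet x t - taylor_a (F x) (taylor_b x t - F x))
      + (taylor_a (F x) (taylor_b x t - F x) - taylor_a (F y) (taylor_b y ((x - y) + t) - F y))
      + (taylor_a (F y) (taylor_b y ((x - y) + t) - F y) - taylor_jet y ((x - y) + t))"
    by simp
  ultimately have "norm (taylor_jet x t - taylor_jet y ((x - y) + t)) \<le>
      C_tail * 2 ^ Suc m * r powr \<gamma> + C_shift * r powr \<gamma> + C_tail * 2 ^ Suc m * r powr \<gamma>"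
    unfolding r_def by (metis (no_types, lifting) add_mono norm_triangle_le)
  then show ?thesis unfolding C_diag_def r_def by (simp add: algebra_simps)
qed

lemma jet_rem_diag_le_normalized:
  assumes x: "x \<in> U" and y: "y \<in> U" and "0 < norm (x - y)" "norm (x - y) \<le> 1/2"
    and k: "k \<le> m" and w: "norm w \<le> norm (x - y)"
    and coeff: "\<forall>(cc :: nat \<Rightarrow> 'w) B. (\<forall>s\<in>{0..1}. norm (\<Sum>i\<le>m. s ^ i *\<^sub>R cc i) \<le> B) \<longrightarrow>
      (\<forall>i\<le>m. norm (cc i) \<le> K * B)"
  shows "norm (lip_rem m jet k x y (\<lambda>_. w)) \<le> fact k * (K * (C_diag * norm (x - y) powr \<gamma>))"
proof -
  define cc where "cc i = (1 / fact i) *\<^sub>R lip_rem m jet i x y (\<lambda>_. w)" for i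
  have "(\<Sum>i\<le>m. s ^ i *\<^sub>R cc i) = taylor_jet x (s *\<^sub>R w) - taylor_jet y ((x - y) + s *\<^sub>R w)" for s
  proof -
    have "lip_rem m jet i x y (\<lambda>_. s *\<^sub>R w) = s ^ i *\<^sub>R lip_rem m jet i x y (\<lambda>_. w)" if "i \<le> m" for i
      using multilin_scaleR_diag[OF multilin_sym_multilin[OF multilin_sym_lip_rem[OF that jet_sym[OF x] jet_sym[OF y]]]] .
    then show ?thesis unfolding taylor_jet_shift[OF x y] cc_def by simp
  qed
  moreover have "norm (s *\<^sub>R w) \<le> norm (x - y)" if "s \<in> {0..1}" for s
    using that w mult_left_le_one_le[of "norm w" s] by auto
  ultimately have "\<forall>s\<in>{0..1}. norm (\<Sum>i\<le>m. s ^ i *\<^sub>R cc i) \<le> C_diag * norm (x - y) powr \<gamma>"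
    using taylor_jet_shift_le[OF x y assms(3,4)] by simp
  then have "norm (cc k) \<le> K * (C_diag * norm (x - y) powr \<gamma>)" using coeff k by blast
  moreover have "lip_rem m jet k x y (\<lambda>_. w) = fact k *\<^sub>R cc k" unfolding cc_def by simp
  ultimately show ?thesis by simp
qed

lemma jet_rem_diag_le:
  assumes x: "x \<in> U" and y: "y \<in> U" and "0 < norm (x - y)" "norm (x - y) \<le> 1/2" and k: "k \<le> m"
    and coeff: "\<forall>(cc :: nat \<Rightarrow> 'w) B. (\<forall>s\<in>{0..1}. norm (\<Sum>i\<le>m. s ^ i *\<^sub>R cc i) \<le> B) \<longrightarrow>
      (\<forall>i\<le>m. norm (cc i) \<le> K * B)"
  shows "norm (lip_rem m jet k x y (\<lambda>_. w)) \<le> (fact k * K * C_diag * norm (x - y) powr (\<gamma> - real k)) * norm w ^ k"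
proof -
  define r where "r = norm (x - y)"
  have "r > 0" using assms(3) by (simp add: r_def)
  define w' where "w' = (r / norm w) *\<^sub>R w"
  have "norm w' \<le> r" using \<open>r > 0\<close> by (simp add: w'_def)
  have "w = (norm w / r) *\<^sub>R w'" using \<open>r > 0\<close> by (cases "w = 0") (simp_all add: w'_def)
  then have "lip_rem m jet k x y (\<lambda>_. w) = lip_rem m jet k x y (\<lambda>l. (norm w / r) *\<^sub>R (\<lambda>_. w') l)"
    by simp
  also have "\<dots> = (norm w / r) ^ k *\<^sub>R lip_rem m jet k x y (\<lambda>_. w')"
    by (rule multilin_scaleR_diag[OF multilin_sym_multilin[OF multilin_sym_lip_rem[OF k jet_sym[OF x] jet_sym[OF y]]]])
  finally have "norm (lip_rem m jet k x y (\<lambda>_. w)) = (norm w / r) ^ k * norm (lip_rem m jet k x y (\<lambda>_. w'))"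
    using \<open>r > 0\<close> by simp
  also have "\<dots> \<le> (norm w / r) ^ k * (fact k * (K * (C_diag * r powr \<gamma>)))"
    using jet_rem_diag_le_normalized[OF x y assms(3,4) k _ coeff] \<open>norm w' \<le> r\<close> \<open>r > 0\<close>
    by (intro mult_left_mono) (auto simp: r_def)
  also have "\<dots> = (fact k * K * C_diag * (r powr \<gamma> / r ^ k)) * norm w ^ k"
    using \<open>r > 0\<close> by (simp add: power_divide)
  also have "r powr \<gamma> / r ^ k = r powr (\<gamma> - real k)"
    using \<open>r > 0\<close> by (simp add: powr_diff powr_realpow)
  finally show ?thesis unfolding r_def .
qed

lemma faa_jet_const_nonneg: "faa_jet_const m Ma Mb k \<ge> 0"
  unfolding faa_jet_const_def using Ma_nonneg Mb_nonneg
  by (intro sum_nonneg) (auto intro!: mult_nonneg_nonneg divide_nonneg_nonneg prod_nonneg)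

lemma jet_rem_far_le:
  assumes x: "x \<in> U" and y: "y \<in> U" and far: "1/2 \<le> norm (x - y)" and k: "k \<le> m"
  shows "norm (lip_rem m jet k x y v) \<le> ((faa_jet_const m Ma Mb k + (\<Sum>j\<le>m. faa_jet_const m Ma Mb j)) * 2 powr \<gamma>)
    * norm (x - y) powr (\<gamma> - real k) * (\<Prod>i<k. norm (v i))"
proof -
  define r where "r = norm (x - y)"
  define P where "P = (\<Prod>i<k. norm (v i))"
  define G where "G = 2 powr \<gamma> * r powr (\<gamma> - real k)"
  have "r > 0" "P \<ge> 0" using far by (auto simp: r_def P_def prod_nonneg)
  have power_le_G: "r ^ i \<le> G" if "i \<le> m - k" for i
  proof -
    have "r ^ i = r powr real i" using \<open>r > 0\<close> by (simp add: powr_realpow)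
    also have "\<dots> \<le> G" unfolding G_def using far m_less_gamma k that by (intro powr_le_two_powr_mult) (auto simp: r_def)
    finally show ?thesis .
  qed
  have "norm (jet k x v) \<le> faa_jet_const m Ma Mb k * P" unfolding P_def by (rule jet_bound[OF x])
  also have "\<dots> \<le> faa_jet_const m Ma Mb k * P * G"
    using mult_left_mono[OF power_le_G[of 0] mult_nonneg_nonneg[OF faa_jet_const_nonneg \<open>P \<ge> 0\<close>]] by simp
  moreover have "norm ((1 / fact (j - k)) *\<^sub>R jet j y (\<lambda>i. if i < k then v i else x - y)) \<le> faa_jet_const m Ma Mb j * P * G"
    if "j \<in> {k..m}" for j
  proof -
    have "(\<Prod>p<j. norm (if p < k then v p else x - y)) = (\<Prod>p<k + (j - k). norm (if p < k then v p else x - y))"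
      using that by simp
    also have "\<dots> = P * r ^ (j - k)" unfolding prod_lessThan_add P_def r_def by simp
    finally have "norm (jet j y (\<lambda>i. if i < k then v i else x - y)) \<le> faa_jet_const m Ma Mb j * (P * r ^ (j - k))"
      using jet_bound[OF y] by metis
    also have "\<dots> \<le> faa_jet_const m Ma Mb j * P * G"
      unfolding mult.assoc using that faa_jet_const_nonneg \<open>P \<ge> 0\<close>
      by (intro mult_left_mono power_le_G) auto
    finally show ?thesis by (rule norm_inverse_fact_scaleR_le)
  qed
  ultimately have "norm (lip_rem m jet k x y v) \<le> faa_jet_const m Ma Mb k * P * G + (\<Sum>j=k..m. faa_jet_const m Ma Mb j * P * G)"
    unfolding lip_rem_def by (intro order_trans[OF norm_triangle_ineq4] add_mono order_trans[OF norm_sum sum_mono]) auto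
  also have "\<dots> \<le> faa_jet_const m Ma Mb k * P * G + (\<Sum>j\<le>m. faa_jet_const m Ma Mb j * P * G)"
    using faa_jet_const_nonneg \<open>P \<ge> 0\<close> power_le_G[of 0] by (intro add_left_mono sum_mono2) auto
  also have "\<dots> = ((faa_jet_const m Ma Mb k + (\<Sum>j\<le>m. faa_jet_const m Ma Mb j)) * 2 powr \<gamma>) * r powr (\<gamma> - real k) * P"
  proof -
    have "(\<Sum>j\<le>m. faa_jet_const m Ma Mb j * P * G) = (\<Sum>j\<le>m. faa_jet_const m Ma Mb j) * (P * G)"
      by (simp add: sum_distrib_right mult.assoc)
    then show ?thesis unfolding G_def by (simp add: algebra_simps)
  qed
  finally show ?thesis unfolding r_def P_def .
qed

lemma jet_rem_le:
  assumes k: "k \<le> m"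
  shows "\<exists>C\<ge>0. \<forall>x\<in>U. \<forall>y\<in>U. \<forall>v.
    norm (lip_rem m jet k x y v) \<le> C * norm (x - y) powr (\<gamma> - real k) * (\<Prod>i<k. norm (v i))"
proof -
  obtain K where "K \<ge> 0" and coeff: "\<forall>(cc :: nat \<Rightarrow> 'w) B.
      (\<forall>s\<in>{0..1}. norm (\<Sum>i\<le>m. s ^ i *\<^sub>R cc i) \<le> B) \<longrightarrow> (\<forall>i\<le>m. norm (cc i) \<le> K * B)"
    using poly_coeff_bound by blast
  obtain Kp where "Kp \<ge> 0" and polarization: "\<And>(A :: (nat \<Rightarrow> 'd) \<Rightarrow> 'w) c v. multilin_sym k A \<Longrightarrow> c \<ge> 0 \<Longrightarrow>
      \<forall>w. norm (A (\<lambda>_. w)) \<le> c * norm w ^ k \<Longrightarrow> norm (A v) \<le> Kp * c * (\<Prod>i<k. norm (v i))"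
    using multilin_sym_polarization by blast
  define C_near where "C_near = Kp * (fact k * K * C_diag)"
  define C_far where "C_far = (faa_jet_const m Ma Mb k + (\<Sum>j\<le>m. faa_jet_const m Ma Mb j)) * 2 powr \<gamma>"
  have "C_near \<ge> 0" "C_far \<ge> 0" unfolding C_near_def C_far_def
    using \<open>Kp \<ge> 0\<close> \<open>K \<ge> 0\<close> C_diag_nonneg faa_jet_const_nonneg
    by (auto intro!: add_nonneg_nonneg sum_nonneg mult_nonneg_nonneg)
  show ?thesis
  proof (intro exI[of _ "C_near + C_far"] conjI ballI allI)
    show "0 \<le> C_near + C_far" using \<open>C_near \<ge> 0\<close> \<open>C_far \<ge> 0\<close> by simp
    fix x y and v :: "nat \<Rightarrow> 'd" assume x: "x \<in> U" and y: "y \<in> U"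
    define X where "X = norm (x - y) powr (\<gamma> - real k) * (\<Prod>i<k. norm (v i))"
    have "X \<ge> 0" unfolding X_def by (intro mult_nonneg_nonneg prod_nonneg) auto
    consider "x = y" | "0 < norm (x - y)" "norm (x - y) \<le> 1/2" | "1/2 \<le> norm (x - y)" by fastforce
    then have "norm (lip_rem m jet k x y v) \<le> C_near * X \<or> norm (lip_rem m jet k x y v) \<le> C_far * X"
    proof cases
      case 1
      have "lip_rem m jet k x y v = 0"
        unfolding 1 by (intro lip_rem_self[OF k] multilin_sym_multilin jet_sym y)
      then show ?thesis using \<open>C_far \<ge> 0\<close> \<open>X \<ge> 0\<close> by simp
    next
      case 2
      have "norm (lip_rem m jet k x y v) \<le> Kp * (fact k * K * C_diag * norm (x - y) powr (\<gamma> - real k)) * (\<Prod>i<k. norm (v i))"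
        using jet_rem_diag_le[OF x y 2 k coeff] \<open>K \<ge> 0\<close> C_diag_nonneg
        by (intro polarization multilin_sym_lip_rem[OF k] jet_sym x y) auto
      then show ?thesis unfolding C_near_def X_def by (simp add: mult_ac)
    next
      case 3
      then show ?thesis using jet_rem_far_le[OF x y 3 k] unfolding C_far_def X_def by (simp add: mult_ac)
    qed
    then show "norm (lip_rem m jet k x y v) \<le> (C_near + C_far) * norm (x - y) powr (\<gamma> - real k) * (\<Prod>i<k. norm (v i))"
      using mult_right_mono[OF _ \<open>X \<ge> 0\<close>, of C_near "C_near + C_far"] mult_right_mono[OF _ \<open>X \<ge> 0\<close>, of C_far "C_near + C_far"]
        \<open>C_near \<ge> 0\<close> \<open>C_far \<ge> 0\<close> unfolding X_def by (auto simp: mult.assoc)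
  qed
qed

theorem lip_coll_jet: "\<exists>C. lip_coll \<gamma> C U jet"
proof -
  obtain C_rem where C_rem: "\<And>k x y v. k \<le> m \<Longrightarrow> x \<in> U \<Longrightarrow> y \<in> U \<Longrightarrow>
      norm (lip_rem m jet k x y v) \<le> C_rem k * norm (x - y) powr (\<gamma> - real k) * (\<Prod>i<k. norm (v i))"
    and "\<And>k. k \<le> m \<Longrightarrow> C_rem k \<ge> 0"
    using jet_rem_le by metis
  define C where "C = (\<Sum>k\<le>m. faa_jet_const m Ma Mb k + C_rem k)"
  have jet_const_le: "faa_jet_const m Ma Mb k \<le> C" and rem_const_le: "C_rem k \<le> C" if "k \<le> m" for k
    using that faa_jet_const_nonneg \<open>\<And>k. k \<le> m \<Longrightarrow> C_rem k \<ge> 0\<close>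
    unfolding C_def by (auto intro!: order_trans[OF _ member_le_sum[of k]] add_nonneg_nonneg)
  have prod_ge: "0 \<le> (\<Prod>i<k. norm (v i))" for k and v :: "nat \<Rightarrow> 'd" by (intro prod_nonneg) auto
  show ?thesis
  proof (intro exI[of _ C], unfold lip_coll_def, intro allI impI conjI ballI)
    fix k x y v assume k: "k \<le> m" and x: "x \<in> U"
    show "multilin_sym k (jet k x)" by (rule jet_sym[OF x])
    show "norm (jet k x v) \<le> C * (\<Prod>i<k. norm (v i))"
      by (rule order_trans[OF jet_bound[OF x] mult_right_mono[OF jet_const_le[OF k] prod_ge]])
    assume y: "y \<in> U"
    have "norm (lip_rem m jet k x y v) \<le> C_rem k * (norm (x - y) powr (\<gamma> - real k) * (\<Prod>i<k. norm (v i)))"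
      using C_rem[OF k x y, of v] by (simp add: mult.assoc)
    also have "\<dots> \<le> C * (norm (x - y) powr (\<gamma> - real k) * (\<Prod>i<k. norm (v i)))"
      by (rule mult_right_mono[OF rem_const_le[OF k] mult_nonneg_nonneg[OF powr_ge_zero prod_ge]])
    finally show "norm (lip_rem m jet k x y v) \<le> C * norm (x - y) powr (\<gamma> - real k) * (\<Prod>i<k. norm (v i))"
      by (simp add: mult.assoc)
  qed
qed

end

section \<open>Charts of the F-induced structure\<close>

lemma chart_inverse_on_unit_ball:
  fixes F :: "'a::real_normed_vector \<Rightarrow> 'e"
  assumes "inj F" and \<phi>: "\<forall>y\<in>ball 0 1. \<phi> y = y" and z: "z \<in> ball 0 1"
  shows "the_inv_into (F ` ball x 1) (\<lambda>u. \<phi> (inv F u - x)) z = F (z + x)"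
proof (rule the_inv_into_f_eq)
  have "w - x \<in> ball 0 1" if "w \<in> ball x 1" for w
    using that by (simp add: dist_norm norm_minus_commute)
  then show "inj_on (\<lambda>u. \<phi> (inv F u - x)) (F ` ball x 1)"
    using \<phi> by (auto intro!: inj_onI simp: inv_f_f[OF \<open>inj F\<close>])
  show "\<phi> (inv F (F (z + x)) - x) = z" using \<phi> z by (simp add: inv_f_f[OF \<open>inj F\<close>])
  show "F (z + x) \<in> F ` ball x 1" using z by (auto simp: dist_norm)
qed

text \<open>Only the values of \<phi> on the unit ball matter, since the charts are only evaluated there.\<close>

theorem mainTheorem7:
  fixes \<gamma> :: real
    and f :: "'e::real_normed_vector \<Rightarrow> 'w::banach"
    and V :: "'e set"
    and F :: "real^'n \<Rightarrow> 'e"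
    and \<phi> :: "real^'n \<Rightarrow> real^'n"
  assumes "\<gamma> \<ge> 1"
    and "\<exists>M. lip_gamma_on \<gamma> M V f"
    and "\<exists>G. homeomorphism UNIV V F G"
    and "\<exists>M. lip_gamma_on \<gamma> M UNIV F"
    and "\<exists>M. lip_gamma_on \<gamma> M UNIV \<phi>"
    and "\<forall>y\<in>ball 0 1. \<phi> y = y"
    and "closure {y. \<phi> y \<noteq> 0} \<subseteq> ball 0 2"
  shows "\<exists>C. \<forall>x\<in>lattice_I.
           lip_gamma_on \<gamma> C (ball 0 1)
             (\<lambda>z. f (the_inv_into (F ` ball x 1) (\<lambda>u. \<phi> (inv F u - x)) z))"
proof -
  obtain Mf a where a: "lip_coll \<gamma> Mf V a" and a_0: "\<And>u v. u \<in> V \<Longrightarrow> a 0 u v = f u"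
    using assms(2) unfolding lip_gamma_on_def by blast
  obtain MF b where b: "lip_coll \<gamma> MF UNIV b" and b_0: "\<And>z v. b 0 z v = F z"
    using assms(4) unfolding lip_gamma_on_def by blast
  obtain G where hom: "homeomorphism UNIV V F G" using assms(3) by blast
  then have "inj F" unfolding homeomorphism_def by (metis injI UNIV_I)
  have F_into: "F z \<in> V" for z using hom unfolding homeomorphism_def by blast
  interpret lip_composition \<gamma> a b F UNIV V "max Mf 0" "max MF 0"
    using assms(1) lip_coll_mono[OF a] lip_coll_mono[OF b] b_0 F_into by unfold_locales auto
  obtain C where jet: "lip_coll \<gamma> C UNIV jet" using lip_coll_jet by blast
  have "lip_gamma_on \<gamma> C (ball 0 1) (\<lambda>z. f (the_inv_into (F ` ball x 1) (\<lambda>u. \<phi> (inv F u - x)) z))"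
    for x :: "real^'n"
    unfolding lip_gamma_on_def
  proof (intro exI conjI ballI allI)
    show "lip_coll \<gamma> C (ball 0 1) (\<lambda>k z. jet k (z + x))" by (rule lip_coll_translate[OF jet])
    fix z :: "real^'n" and v assume "z \<in> ball 0 1"
    then show "jet 0 (z + x) v = f (the_inv_into (F ` ball x 1) (\<lambda>u. \<phi> (inv F u - x)) z)"
      using chart_inverse_on_unit_ball[OF \<open>inj F\<close> assms(6)] jet_0 a_0 F_into by simp
  qed
  then show ?thesis by blast
qed

end
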